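(* Let $N\ge1$ and, for $1\le m\le N$, let $a_m,b_m\in\mathbb{R}$ with $b_m\ne0$, and let $f_m:\mathbb{R}\to\mathbb{R}$ with $f_m\in L^2(\mathbb{R})$, where $f_m$ is not identically zero for some $1\le m\le N$. Then the system $$\Big[\frac12\ln\Big(-\frac{d^2}{dx^2}\Big)\Big]u_m-b_m\frac{du_m}{dx}-a_mu_m=f_m(x),\qquad x\in\mathbb{R},\ 1\le m\le N,$$ admits a unique solution $u_0=(u_{0,1},\dots,u_{0,N})^T\in L^2(\mathbb{R},\mathbb{R}^N)$.
   Context: Fourier transform: $\widehat{\phi}(p)=\frac{1}{\sqrt{2\pi}}\int_{\mathbb{R}}\phi(x)e^{-ipx}dx$. The logarithmic Laplacian $\ln(-\frac{d^2}{dx^2})$ is the operator with Fourier symbol $2\ln|p|$, so the operator on the left side of the $m$-th equation has Fourier symbol $\ln\big(\frac{|p|}{e^{a_m}}\big)-ib_mp$, and the $m$-th equation for $u_m\in L^2(\mathbb{R})$ means $\big(\ln\big(\frac{|p|}{e^{a_m}}\big)-ib_mp\big)\widehat{u_m}(p)=\widehat{f_m}(p)$ for a.e. $p\in\mathbb{R}$. $L^2(\mathbb{R},\mathbb{R}^N)$ carries the norm $\|u\|^2=\sum_{m=1}^N\|u_m\|_{L^2(\mathbb{R})}^2$. *)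

theory Defs
  imports "HOL-Analysis.Analysis"
begin

definition L2_real :: "(real \<Rightarrow> real) \<Rightarrow> bool" where
  "L2_real g \<longleftrightarrow> g \<in> borel_measurable lborel \<and> integrable lborel (\<lambda>x. (g x)\<^sup>2)"

definition L2_complex :: "(real \<Rightarrow> complex) \<Rightarrow> bool" where
  "L2_complex g \<longleftrightarrow> g \<in> borel_measurable lborel \<and> integrable lborel (\<lambda>x. (cmod (g x))\<^sup>2)"

definition fourier_trunc :: "(real \<Rightarrow> real) \<Rightarrow> real \<Rightarrow> real \<Rightarrow> complex" where
  "fourier_trunc \<phi> R p =
     complex_of_real (1 / sqrt (2 * pi)) *
     (LINT x:{-R..R}|lborel. complex_of_real (\<phi> x) * exp (- \<i> * complex_of_real (p * x)))"

definition has_L2_fourier :: "(real \<Rightarrow> real) \<Rightarrow> (real \<Rightarrow> complex) \<Rightarrow> bool" where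
  "has_L2_fourier \<phi> \<Phi> \<longleftrightarrow> L2_complex \<Phi> \<and>
     ((\<lambda>R. \<integral>\<^sup>+ p. ennreal ((cmod (\<Phi> p - fourier_trunc \<phi> R p))\<^sup>2) \<partial>lborel) \<longlongrightarrow> 0) at_top"

text \<open>Fourier symbol of (1/2) ln(-d^2/dx^2) - b d/dx - a.\<close>
definition symb :: "real \<Rightarrow> real \<Rightarrow> real \<Rightarrow> complex" where
  "symb a b p = complex_of_real (ln (\<bar>p\<bar> / exp a)) - \<i> * complex_of_real (b * p)"

definition solves_eq :: "real \<Rightarrow> real \<Rightarrow> (real \<Rightarrow> real) \<Rightarrow> (real \<Rightarrow> real) \<Rightarrow> bool" where
  "solves_eq a b f u \<longleftrightarrow> L2_real u \<and>
     (\<exists>U F. has_L2_fourier u U \<and> has_L2_fourier f F \<and>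
        (AE p in lborel. symb a b p * U p = F p))"

end

theory Submission
  imports Defs "HOL-Probability.Probability"
begin

(* Each equation is solved on the Fourier side. Away from p = 0 the symbol
   ln (|p| / e^a) - i b p stays away from zero: its real part is small only for |p| near e^a,
   and there its imaginary part is at least |b| e^(a - 1). So U = F / symbol is square
   integrable, where F is the L2 Fourier transform of f, and U is Hermitian because f is real.

   Damping with the
   Gaussian weight gauss (sigma p) and letting sigma tend to 0 gives Plancherel's inequality for
   integrable functions, which makes the truncated transforms Cauchy in L2. Tested against
   Gaussians, whose transforms are again Gaussians, the limit satisfies a duality formula; with
   the uniqueness theorem for characteristic functions this makes the transform injective, and a
   Hermitian U turns out to be the transform of the real part of the transform of cnj U. *)

section \<open>The Fourier integral of integrable functions\<close>

lemma borel_measurable_cnj [measurable (raw)]: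
  fixes f :: "'a \<Rightarrow> complex"
  assumes "f \<in> borel_measurable M"
  shows "(\<lambda>x. cnj (f x)) \<in> borel_measurable M"
proof -
  have "cnj \<in> borel_measurable borel"
    by (rule borel_measurable_continuous_onI) (intro continuous_intros)
  from measurable_compose[OF assms this] show ?thesis by (simp add: o_def)
qed

definition fourier_kernel :: "real \<Rightarrow> real \<Rightarrow> complex" where
  "fourier_kernel p x = exp (- \<i> * complex_of_real (p * x))"

lemma fourier_kernel_measurable [measurable (raw)]:
  "f \<in> borel_measurable M \<Longrightarrow> g \<in> borel_measurable M \<Longrightarrow> (\<lambda>x. fourier_kernel (f x) (g x)) \<in> borel_measurable M"
  unfolding fourier_kernel_def by measurable

lemma norm_fourier_kernel [simp]: "norm (fourier_kernel p x) = 1"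
proof -
  have "fourier_kernel p x = exp (\<i> * complex_of_real (- (p * x)))"
    unfolding fourier_kernel_def by simp
  then show ?thesis by (simp only: norm_exp_i_times)
qed

lemma fourier_kernel_add_left: "fourier_kernel (p + q) x = fourier_kernel p x * fourier_kernel q x"
  unfolding fourier_kernel_def by (simp add: exp_add[symmetric] algebra_simps)

lemma fourier_kernel_add_right: "fourier_kernel p (x + y) = fourier_kernel p x * fourier_kernel p y"
  unfolding fourier_kernel_def by (simp add: exp_add[symmetric] algebra_simps)

lemma fourier_kernel_commute: "fourier_kernel p x = fourier_kernel x p"
  unfolding fourier_kernel_def by (simp add: mult.commute)

lemma cnj_fourier_kernel: "cnj (fourier_kernel p x) = fourier_kernel (- p) x"
  unfolding fourier_kernel_def by (simp add: exp_cnj)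

lemma fourier_kernel_minus: "fourier_kernel (- p) (- x) = fourier_kernel p x"
  unfolding fourier_kernel_def by simp

lemma fourier_kernel_0 [simp]: "fourier_kernel 0 x = 1"
  unfolding fourier_kernel_def by simp

lemma integrable_mult_fourier_kernel:
  fixes g :: "real \<Rightarrow> complex"
  assumes "integrable lborel g"
  shows "integrable lborel (\<lambda>x. g x * fourier_kernel p x)"
    and "integrable lborel (\<lambda>x. g x * fourier_kernel x p)"
  using assms by (rule Bochner_Integration.integrable_bound; use assms in \<open>auto simp: norm_mult\<close>)+

lemma norm_integral_fourier_kernel_le:
  "norm (CLINT x|lborel. g x * fourier_kernel p x) \<le> (LINT x|lborel. norm (g x))"
  using integral_norm_bound[of lborel "\<lambda>x. g x * fourier_kernel p x"] by (simp add: norm_mult)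

lemma integral_fourier_kernel_swap:
  fixes g h :: "real \<Rightarrow> complex"
  assumes gi: "integrable lborel g" and hi: "integrable lborel h"
  shows "(CLINT p|lborel. (CLINT x|lborel. g x * fourier_kernel p x) * h p)
       = (CLINT x|lborel. g x * (CLINT p|lborel. h p * fourier_kernel p x))"
proof -
  have [measurable]: "g \<in> borel_measurable borel" "h \<in> borel_measurable borel"
    using gi hi by auto
  have "integrable (lborel \<Otimes>\<^sub>M lborel) (\<lambda>(x, p). g x * h p * fourier_kernel p x)"
  proof (rule lborel_pair.Fubini_integrable)
    show "integrable lborel (\<lambda>x. LINT p|lborel. norm (case (x, p) of (x, p) \<Rightarrow> g x * h p * fourier_kernel p x))"
      using gi by (simp add: norm_mult)
    show "AE x in lborel. integrable lborel (\<lambda>p. case (x, p) of (x, p) \<Rightarrow> g x * h p * fourier_kernel p x)"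
      using integrable_mult_fourier_kernel(2)[OF hi] by (simp add: mult.assoc)
  qed measurable
  from lborel_pair.Fubini_integral[OF this]
  have "(CLINT p|lborel. CLINT x|lborel. (g x * fourier_kernel p x) * h p)
      = (CLINT x|lborel. CLINT p|lborel. g x * (h p * fourier_kernel p x))"
    by (simp add: ac_simps)
  then show ?thesis
    by (simp only: integral_mult_left_zero integral_mult_right_zero)
qed

definition fourier_integral :: "(real \<Rightarrow> complex) \<Rightarrow> real \<Rightarrow> complex" where
  "fourier_integral g p =
     complex_of_real (1 / sqrt (2 * pi)) * (CLINT x|lborel. g x * fourier_kernel p x)"

lemma fourier_integral_measurable [measurable]:
  assumes [measurable]: "g \<in> borel_measurable borel"
  shows "fourier_integral g \<in> borel_measurable borel"
  unfolding fourier_integral_def[abs_def] by measurable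

lemma fourier_integral_diff:
  assumes "integrable lborel g" "integrable lborel h"
  shows "fourier_integral (\<lambda>x. g x - h x) p = fourier_integral g p - fourier_integral h p"
  using integrable_mult_fourier_kernel[OF assms(1)] integrable_mult_fourier_kernel[OF assms(2)]
  by (simp add: fourier_integral_def left_diff_distrib right_diff_distrib)

lemma real_distribution_normalized_density:
  fixes q :: "real \<Rightarrow> real"
  assumes q: "integrable lborel q" "\<And>x. q x \<ge> 0" and m: "(LINT x|lborel. q x) > 0"
  shows "real_distribution (density lborel (\<lambda>x. ennreal (q x / (LINT x|lborel. q x))))"
  unfolding real_distribution_def real_distribution_axioms_def
proof (intro conjI)
  show "prob_space (density lborel (\<lambda>x. ennreal (q x / (LINT x|lborel. q x))))"
  proof
    have "emeasure (density lborel (\<lambda>x. ennreal (q x / (LINT x|lborel. q x)))) UNIV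
        = ennreal (LINT x|lborel. q x / (LINT x|lborel. q x))"
      using q m by (simp add: emeasure_density nn_integral_eq_integral)
    also have "\<dots> = 1" using m by simp
    finally show "emeasure (density lborel (\<lambda>x. ennreal (q x / (LINT x|lborel. q x))))
        (space (density lborel (\<lambda>x. ennreal (q x / (LINT x|lborel. q x))))) = 1"
      by simp
  qed
qed simp

lemma char_normalized_density:
  fixes q :: "real \<Rightarrow> real"
  assumes "q \<in> borel_measurable borel" "\<And>x. q x \<ge> 0" "m > 0"
  shows "char (density lborel (\<lambda>x. ennreal (q x / m))) t
       = (CLINT x|lborel. complex_of_real (q x) * iexp (t * x)) / m"
proof -
  have "char (density lborel (\<lambda>x. ennreal (q x / m))) t = (CLINT x|lborel. (q x / m) *\<^sub>R iexp (t * x))"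
    unfolding char_def using assms by (subst integral_density) auto
  also have "\<dots> = (CLINT x|lborel. complex_of_real (q x) * iexp (t * x)) / m"
    by (simp add: scaleR_conv_of_real mult.commute mult.left_commute)
  finally show ?thesis .
qed

lemma AE_eq_if_char_integrals_eq:
  fixes q n :: "real \<Rightarrow> real"
  assumes q: "integrable lborel q" "\<And>x. q x \<ge> 0" and n: "integrable lborel n" "\<And>x. n x \<ge> 0"
    and char_eq: "\<And>t. (CLINT x|lborel. complex_of_real (q x) * iexp (t * x))
                      = (CLINT x|lborel. complex_of_real (n x) * iexp (t * x))"
  shows "AE x in lborel. q x = n x"
proof -
  have qm [measurable]: "q \<in> borel_measurable borel" and nm [measurable]: "n \<in> borel_measurable borel"
    using q n by auto
  define m where "m = (LINT x|lborel. q x)"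
  have m_eq: "m = (LINT x|lborel. n x)"
    using char_eq[of 0] unfolding m_def by simp
  show ?thesis
  proof (cases "m = 0")
    case True
    have "AE x in lborel. q x = 0"
      using True q unfolding m_def by (subst integral_nonneg_eq_0_iff_AE[symmetric]) auto
    moreover have "AE x in lborel. n x = 0"
      using True n unfolding m_eq by (subst integral_nonneg_eq_0_iff_AE[symmetric]) auto
    ultimately show ?thesis by eventually_elim simp
  next
    case False
    then have m: "m > 0" using q unfolding m_def by (metis integral_nonneg_AE AE_I2 order_le_less)
    have "density lborel (\<lambda>x. ennreal (q x / m)) = density lborel (\<lambda>x. ennreal (n x / m))"
    proof (rule Levy_uniqueness)
      show "real_distribution (density lborel (\<lambda>x. ennreal (q x / m)))"
        using real_distribution_normalized_density[OF q] m unfolding m_def by simp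
      show "real_distribution (density lborel (\<lambda>x. ennreal (n x / m)))"
        using real_distribution_normalized_density[OF n] m unfolding m_eq by simp
      show "char (density lborel (\<lambda>x. ennreal (q x / m))) = char (density lborel (\<lambda>x. ennreal (n x / m)))"
        by (rule ext, simp only: char_normalized_density[OF qm q(2) m] char_normalized_density[OF nm n(2) m] char_eq)
    qed
    then have "AE x in lborel. ennreal (q x / m) = ennreal (n x / m)"
      by (subst (asm) sigma_finite_measure.density_unique_iff[OF sigma_finite_lborel]) auto
    then show ?thesis
      by eventually_elim (use m q n in \<open>simp add: ennreal_inj divide_nonneg_pos\<close>)
  qed
qed

lemma AE_zero_if_char_integral_zero:
  fixes r :: "real \<Rightarrow> real"
  assumes r: "integrable lborel r"
    and char0: "\<And>t. (CLINT x|lborel. complex_of_real (r x) * iexp (t * x)) = 0"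
  shows "AE x in lborel. r x = 0"
proof -
  define q where "q x = max (r x) 0" for x
  define n where "n x = max (- r x) 0" for x
  have qi: "integrable lborel q" and ni: "integrable lborel n"
    unfolding q_def n_def using r by auto
  have r_eq: "r x = q x - n x" for x unfolding q_def n_def by auto
  have q0: "q x \<ge> 0" and n0: "n x \<ge> 0" for x unfolding q_def n_def by auto
  have iexp_integrable: "integrable lborel (\<lambda>x. complex_of_real (h x) * iexp (t * x))"
    if "integrable lborel h" for h :: "real \<Rightarrow> real" and t
    using that by (intro Bochner_Integration.integrable_bound[OF that]) (auto simp: norm_mult)
  have "AE x in lborel. q x = n x"
  proof (rule AE_eq_if_char_integrals_eq)
    fix t
    have "(CLINT x|lborel. complex_of_real (q x) * iexp (t * x))
        - (CLINT x|lborel. complex_of_real (n x) * iexp (t * x))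
        = (CLINT x|lborel. complex_of_real (r x) * iexp (t * x))"
      by (subst Bochner_Integration.integral_diff[symmetric, OF iexp_integrable[OF qi] iexp_integrable[OF ni]])
         (auto simp: r_eq algebra_simps intro: Bochner_Integration.integral_cong)
    then show "(CLINT x|lborel. complex_of_real (q x) * iexp (t * x))
        = (CLINT x|lborel. complex_of_real (n x) * iexp (t * x))"
      using char0[of t] by simp
  qed (simp_all add: qi ni q0 n0)
  then show ?thesis by eventually_elim (simp add: r_eq)
qed

lemma AE_zero_if_fourier_kernel_integrals_zero:
  fixes h :: "real \<Rightarrow> complex"
  assumes hi: "integrable lborel h"
    and vanish: "\<And>p. (CLINT x|lborel. h x * fourier_kernel p x) = 0"
  shows "AE x in lborel. h x = 0"
proof -
  have cnj_vanish: "(CLINT x|lborel. cnj (h x) * fourier_kernel p x) = 0" for p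
  proof -
    have "(CLINT x|lborel. cnj (h x) * fourier_kernel p x) = (CLINT x|lborel. cnj (h x * fourier_kernel (- p) x))"
      by (simp add: cnj_fourier_kernel)
    also have "\<dots> = cnj (CLINT x|lborel. h x * fourier_kernel (- p) x)"
      by (rule Bochner_Integration.integral_cnj)
    finally show ?thesis by (simp add: vanish)
  qed
  have "AE x in lborel. Re (w * h x) = 0" for w
  proof (rule AE_zero_if_char_integral_zero)
    fix t
    have Re_eq: "complex_of_real (Re z) * k = (z * k + cnj z * k) / 2" for z k
      by (simp add: distrib_right[symmetric] complex_add_cnj)
    have "(CLINT x|lborel. complex_of_real (Re (w * h x)) * iexp (t * x))
        = (CLINT x|lborel. (w * h x * fourier_kernel (- t) x + cnj (w * h x) * fourier_kernel (- t) x) / 2)"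
      unfolding Re_eq by (simp add: fourier_kernel_def)
    also have "\<dots> = 0"
      using integrable_mult_fourier_kernel(1)[OF hi] integrable_mult_fourier_kernel(1)[of "\<lambda>x. cnj (w * h x)"] hi
      by (simp add: vanish cnj_vanish mult.assoc)
    finally show "(CLINT x|lborel. complex_of_real (Re (w * h x)) * iexp (t * x)) = 0" .
  qed (use hi in auto)
  \<comment> \<open>\<open>w = 1\<close> and \<open>w = - \<i>\<close> give the real and the imaginary part\<close>
  from this[of 1] this[of "- \<i>"] show ?thesis
    by eventually_elim (simp add: complex_eq_iff)
qed

section \<open>Gaussians\<close>

definition gauss :: "real \<Rightarrow> real" where
  "gauss x = exp (- (x\<^sup>2) / 2)"

lemma continuous_on_gauss: "continuous_on A gauss"
  unfolding gauss_def by (intro continuous_intros) auto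

lemma gauss_measurable [measurable (raw)]:
  assumes "f \<in> borel_measurable M"
  shows "(\<lambda>x. gauss (f x)) \<in> borel_measurable M"
  using measurable_compose[OF assms borel_measurable_continuous_onI[OF continuous_on_gauss]]
  by (simp add: o_def)

lemma gauss_pos: "gauss x > 0"
  unfolding gauss_def by simp

lemma gauss_nonneg: "gauss x \<ge> 0"
  unfolding gauss_def by simp

lemma gauss_le_1: "gauss x \<le> 1"
  unfolding gauss_def by simp

lemma gauss_minus: "gauss (- x) = gauss x"
  unfolding gauss_def by simp

lemma gauss_0 [simp]: "gauss 0 = 1"
  unfolding gauss_def by simp

lemma gauss_eq_normal_density: "gauss x = sqrt (2 * pi) * std_normal_density x"
  unfolding gauss_def normal_density_def by simp

lemma integrable_gauss [simp]: "integrable lborel gauss"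
  unfolding gauss_eq_normal_density[abs_def] by simp

lemma integrable_gauss_affine: "c \<noteq> 0 \<Longrightarrow> integrable lborel (\<lambda>x. gauss (t + c * x))"
  using lborel_integrable_real_affine[OF integrable_gauss] by simp

lemma integral_gauss_fourier_kernel:
  "(CLINT y|lborel. complex_of_real (gauss y) * fourier_kernel p y) = complex_of_real (sqrt (2 * pi) * gauss p)"
proof -
  have "char std_normal_distribution (- p) = (CLINT x|lborel. std_normal_density x *\<^sub>R iexp (- p * x))"
    unfolding char_def by (subst integral_density) (auto simp: normal_density_nonneg)
  also have "\<dots> = (CLINT x|lborel. complex_of_real (gauss x) * fourier_kernel p x / complex_of_real (sqrt (2 * pi)))"
    by (rule Bochner_Integration.integral_cong)
       (simp_all add: gauss_eq_normal_density scaleR_conv_of_real fourier_kernel_def mult.commute)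
  also have "\<dots> = (CLINT x|lborel. complex_of_real (gauss x) * fourier_kernel p x) / sqrt (2 * pi)"
    by (rule integral_divide_zero)
  finally have "(CLINT x|lborel. complex_of_real (gauss x) * fourier_kernel p x)
      = sqrt (2 * pi) * char std_normal_distribution (- p)"
    by (simp add: field_simps)
  also have "\<dots> = complex_of_real (sqrt (2 * pi) * gauss p)"
    by (simp add: char_std_normal_distribution gauss_def)
  finally show ?thesis .
qed

lemma nn_integral_gauss: "(\<integral>\<^sup>+x. ennreal (gauss x) \<partial>lborel) = ennreal (sqrt (2 * pi))"
proof -
  have "(LINT x|lborel. gauss x) = sqrt (2 * pi)"
    using integral_gauss_fourier_kernel[of 0] by simp
  then show ?thesis using gauss_pos by (subst nn_integral_eq_integral) (auto simp: less_imp_le)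
qed

definition gauss_kernel :: "real \<Rightarrow> real \<Rightarrow> real" where
  "gauss_kernel \<sigma> t = sqrt (2 * pi) / \<sigma> * gauss (t / \<sigma>)"

lemma gauss_kernel_measurable [measurable]: "gauss_kernel \<sigma> \<in> borel_measurable borel"
  unfolding gauss_kernel_def[abs_def] by measurable

lemma gauss_kernel_nonneg: "\<sigma> > 0 \<Longrightarrow> gauss_kernel \<sigma> t \<ge> 0"
  unfolding gauss_kernel_def by (simp add: gauss_nonneg)

lemma integrable_gauss_dilated: "\<sigma> > 0 \<Longrightarrow> integrable lborel (\<lambda>p. gauss (\<sigma> * p))"
  using integrable_gauss_affine[of \<sigma> 0] by simp

lemma integral_gauss_scaled_fourier_kernel:
  assumes "\<sigma> > 0"
  shows "(CLINT p|lborel. complex_of_real (gauss (\<sigma> * p)) * fourier_kernel t p)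
       = complex_of_real (gauss_kernel \<sigma> t)"
proof -
  have "(CLINT p|lborel. complex_of_real (gauss (\<sigma> * p)) * fourier_kernel t p)
      = \<bar>1 / \<sigma>\<bar> *\<^sub>R (CLINT q|lborel. complex_of_real (gauss (\<sigma> * (0 + 1 / \<sigma> * q))) * fourier_kernel t (0 + 1 / \<sigma> * q))"
    using assms by (intro lborel_integral_real_affine) simp
  also have "\<dots> = (1 / \<sigma>) *\<^sub>R (CLINT q|lborel. complex_of_real (gauss q) * fourier_kernel (t / \<sigma>) q)"
    using assms by (simp add: fourier_kernel_def)
  finally show ?thesis
    by (simp add: integral_gauss_fourier_kernel scaleR_conv_of_real gauss_kernel_def)
qed

lemma nn_integral_gauss_kernel:
  assumes "\<sigma> > 0"
  shows "(\<integral>\<^sup>+t. ennreal (gauss_kernel \<sigma> t) \<partial>lborel) = ennreal (2 * pi)"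
proof -
  have "(\<integral>\<^sup>+t. ennreal (gauss_kernel \<sigma> t) \<partial>lborel)
      = ennreal \<sigma> * (\<integral>\<^sup>+q. ennreal (sqrt (2 * pi) / \<sigma> * gauss (\<sigma> * q / \<sigma>)) \<partial>lborel)"
    using assms by (subst nn_integral_real_affine[where c = \<sigma> and t = 0]) (auto simp: gauss_kernel_def)
  also have "\<dots> = ennreal \<sigma> * (\<integral>\<^sup>+q. ennreal (sqrt (2 * pi) / \<sigma>) * ennreal (gauss q) \<partial>lborel)"
    using assms by (simp add: ennreal_mult[symmetric] gauss_nonneg)
  also have "\<dots> = ennreal (2 * pi)"
    using assms
    by (simp add: nn_integral_cmult nn_integral_gauss ennreal_mult''[symmetric] ennreal_mult[symmetric])
  finally show ?thesis .
qed

lemma fourier_integral_gauss_modulated: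
  "fourier_integral (\<lambda>p. complex_of_real (gauss p) * fourier_kernel t p) = (\<lambda>x. complex_of_real (gauss (x + t)))"
proof
  fix x
  have "(CLINT p|lborel. complex_of_real (gauss p) * fourier_kernel t p * fourier_kernel x p)
      = (CLINT p|lborel. complex_of_real (gauss p) * fourier_kernel (x + t) p)"
    by (simp add: mult.assoc fourier_kernel_add_left add.commute)
  then show "fourier_integral (\<lambda>p. complex_of_real (gauss p) * fourier_kernel t p) x = complex_of_real (gauss (x + t))"
    by (simp add: fourier_integral_def integral_gauss_fourier_kernel)
qed

lemma fourier_integral_gauss_shifted:
  "fourier_integral (\<lambda>x. complex_of_real (gauss (x + s))) = (\<lambda>p. complex_of_real (gauss p) * fourier_kernel (- s) p)"
proof
  fix p
  have "(CLINT x|lborel. complex_of_real (gauss (x + s)) * fourier_kernel p x)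
      = (CLINT x|lborel. complex_of_real (gauss ((- s + 1 * x) + s)) * fourier_kernel p (- s + 1 * x))"
    using lborel_integral_real_affine[of 1 "\<lambda>x. complex_of_real (gauss (x + s)) * fourier_kernel p x" "- s"] by simp
  also have "\<dots> = (CLINT x|lborel. fourier_kernel p (- s) * (complex_of_real (gauss x) * fourier_kernel p x))"
    by (rule Bochner_Integration.integral_cong) (simp_all only: fourier_kernel_add_right, simp)
  also have "\<dots> = fourier_kernel p (- s) * (CLINT x|lborel. complex_of_real (gauss x) * fourier_kernel p x)"
    by (rule integral_mult_right_zero)
  finally show "fourier_integral (\<lambda>x. complex_of_real (gauss (x + s))) p = complex_of_real (gauss p) * fourier_kernel (- s) p"
    by (simp add: fourier_integral_def integral_gauss_fourier_kernel fourier_kernel_commute[of p "- s"])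
qed

section \<open>Plancherel's inequality\<close>

lemma ennreal_norm_integral_le:
  "ennreal (norm (integral\<^sup>L M f)) \<le> (\<integral>\<^sup>+x. ennreal (norm (f x)) \<partial>M)"
  by (cases "integrable M f") (auto simp: integral_norm_bound_ennreal not_integrable_integral_eq)

lemma nn_integral_lborel_translate:
  fixes f :: "real \<Rightarrow> ennreal"
  assumes [measurable]: "f \<in> borel_measurable borel"
  shows "(\<integral>\<^sup>+y. f (y - x) \<partial>lborel) = integral\<^sup>N lborel f"
    and "(\<integral>\<^sup>+y. f (x - y) \<partial>lborel) = integral\<^sup>N lborel f"
  using nn_integral_real_affine[of f 1 "- x"] nn_integral_real_affine[of f "- 1" x] by simp_all

lemma nn_integral_convolution_form_le:
  fixes a K :: "real \<Rightarrow> real"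
  assumes [measurable]: "a \<in> borel_measurable borel" "K \<in> borel_measurable borel"
    and K: "\<And>t. K t \<ge> 0"
  shows "(\<integral>\<^sup>+x. \<integral>\<^sup>+y. ennreal (\<bar>a x\<bar> * \<bar>a y\<bar> * K (y - x)) \<partial>lborel \<partial>lborel)
       \<le> (\<integral>\<^sup>+t. ennreal (K t) \<partial>lborel) * (\<integral>\<^sup>+x. ennreal ((a x)\<^sup>2) \<partial>lborel)"
    (is "_ \<le> ?K * _")
proof -
  define A where "A x = ennreal ((a x)\<^sup>2 / 2)" for x
  have [measurable]: "A \<in> borel_measurable borel" unfolding A_def[abs_def] by measurable
  have amgm: "ennreal (\<bar>a x\<bar> * \<bar>a y\<bar> * K (y - x)) \<le> A x * ennreal (K (y - x)) + A y * ennreal (K (y - x))"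
    for x y
  proof -
    have "\<bar>a x\<bar> * \<bar>a y\<bar> * K (y - x) \<le> ((a x)\<^sup>2 / 2 + (a y)\<^sup>2 / 2) * K (y - x)"
      using sum_squares_bound[of "\<bar>a x\<bar>" "\<bar>a y\<bar>"] K by (intro mult_right_mono) (simp_all add: field_simps)
    also have "\<dots> = (a x)\<^sup>2 / 2 * K (y - x) + (a y)\<^sup>2 / 2 * K (y - x)"
      by (simp add: distrib_right)
    finally have "ennreal (\<bar>a x\<bar> * \<bar>a y\<bar> * K (y - x))
        \<le> ennreal ((a x)\<^sup>2 / 2 * K (y - x) + (a y)\<^sup>2 / 2 * K (y - x))"
      by (rule ennreal_leI)
    also have "\<dots> = A x * ennreal (K (y - x)) + A y * ennreal (K (y - x))"
      using K[of "y - x"] by (subst ennreal_plus) (simp_all add: A_def ennreal_mult[symmetric])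
    finally show ?thesis .
  qed
  have "(\<integral>\<^sup>+x. \<integral>\<^sup>+y. ennreal (\<bar>a x\<bar> * \<bar>a y\<bar> * K (y - x)) \<partial>lborel \<partial>lborel)
      \<le> (\<integral>\<^sup>+x. \<integral>\<^sup>+y. A x * ennreal (K (y - x)) + A y * ennreal (K (y - x)) \<partial>lborel \<partial>lborel)"
    by (intro nn_integral_mono amgm)
  also have "\<dots> = (\<integral>\<^sup>+x. \<integral>\<^sup>+y. A x * ennreal (K (y - x)) \<partial>lborel \<partial>lborel)
      + (\<integral>\<^sup>+y. \<integral>\<^sup>+x. A y * ennreal (K (y - x)) \<partial>lborel \<partial>lborel)"
    by (simp add: nn_integral_add lborel_pair.Fubini'[of "\<lambda>x y. A y * ennreal (K (y - x))"])
  also have "\<dots> = (\<integral>\<^sup>+x. A x * ?K \<partial>lborel) + (\<integral>\<^sup>+y. A y * ?K \<partial>lborel)"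
    by (simp add: nn_integral_cmult nn_integral_lborel_translate[of "\<lambda>t. ennreal (K t)"])
  also have "\<dots> = ?K * (\<integral>\<^sup>+x. A x + A x \<partial>lborel)"
    by (simp add: nn_integral_multc nn_integral_add distrib_left mult.commute)
  also have "(\<integral>\<^sup>+x. A x + A x \<partial>lborel) = (\<integral>\<^sup>+x. ennreal ((a x)\<^sup>2) \<partial>lborel)"
    by (simp add: A_def ennreal_plus[symmetric] del: ennreal_plus)
  finally show ?thesis .
qed

lemma integral_fourier_gauss_damped:
  fixes g :: "real \<Rightarrow> complex"
  assumes gi: "integrable lborel g" and \<sigma>: "\<sigma> > 0"
  shows "(CLINT p|lborel. (CLINT y|lborel. g y * fourier_kernel p y) * (gauss (\<sigma> * p) * fourier_kernel p (- x)))
       = (CLINT y|lborel. g y * gauss_kernel \<sigma> (y - x))"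
proof -
  have "integrable lborel (\<lambda>p. complex_of_real (gauss (\<sigma> * p)) * fourier_kernel p (- x))"
    by (rule Bochner_Integration.integrable_bound[OF integrable_gauss_dilated[OF \<sigma>]])
       (simp_all add: norm_mult gauss_nonneg)
  moreover have "(CLINT p|lborel. complex_of_real (gauss (\<sigma> * p)) * fourier_kernel p (- x) * fourier_kernel p y)
      = complex_of_real (gauss_kernel \<sigma> (y - x))" for y
  proof -
    have "(CLINT p|lborel. complex_of_real (gauss (\<sigma> * p)) * fourier_kernel p (- x) * fourier_kernel p y)
        = (CLINT p|lborel. complex_of_real (gauss (\<sigma> * p)) * fourier_kernel (y - x) p)"
      by (simp add: mult.assoc fourier_kernel_add_right[symmetric] fourier_kernel_commute[of _ "y - x"])
    then show ?thesis
      by (simp add: integral_gauss_scaled_fourier_kernel[OF \<sigma>])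
  qed
  ultimately show ?thesis
    by (simp add: integral_fourier_kernel_swap[OF gi])
qed

lemma integral_norm_fourier_square_gauss:
  fixes g :: "real \<Rightarrow> complex"
  assumes gi: "integrable lborel g" and \<sigma>: "\<sigma> > 0"
  shows "integrable lborel (\<lambda>p. (cmod (CLINT x|lborel. g x * fourier_kernel p x))\<^sup>2 * gauss (\<sigma> * p))"
    and "complex_of_real (LINT p|lborel. (cmod (CLINT x|lborel. g x * fourier_kernel p x))\<^sup>2 * gauss (\<sigma> * p))
       = (CLINT x|lborel. g x * cnj (CLINT y|lborel. g y * gauss_kernel \<sigma> (y - x)))"
proof -
  have [measurable]: "g \<in> borel_measurable borel" using gi by auto
  define G where "G p = (CLINT x|lborel. g x * fourier_kernel p x)" for p
  have [measurable]: "G \<in> borel_measurable borel" unfolding G_def[abs_def] by measurable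
  define A where "A = (LINT x|lborel. norm (g x))"
  have G_le: "cmod (G p) \<le> A" for p
    unfolding G_def A_def by (rule norm_integral_fourier_kernel_le)
  define h where "h p = cnj (G p) * complex_of_real (gauss (\<sigma> * p))" for p
  have hi: "integrable lborel h"
  proof (rule Bochner_Integration.integrable_bound)
    show "integrable lborel (\<lambda>p. A * gauss (\<sigma> * p))"
      using integrable_gauss_dilated[OF \<sigma>] by simp
    show "AE p in lborel. norm (h p) \<le> norm (A * gauss (\<sigma> * p))"
      using G_le gauss_nonneg order_trans[OF norm_ge_zero G_le]
      by (simp add: h_def norm_mult mult_right_mono)
  qed (simp add: h_def[abs_def])
  show "integrable lborel (\<lambda>p. (cmod (G p))\<^sup>2 * gauss (\<sigma> * p))"
  proof (rule Bochner_Integration.integrable_bound)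
    show "integrable lborel (\<lambda>p. A\<^sup>2 * gauss (\<sigma> * p))"
      using integrable_gauss_dilated[OF \<sigma>] by simp
    show "AE p in lborel. norm ((cmod (G p))\<^sup>2 * gauss (\<sigma> * p)) \<le> norm (A\<^sup>2 * gauss (\<sigma> * p))"
      using G_le gauss_nonneg by (simp add: abs_mult mult_right_mono power_mono)
  qed simp
  have inverse: "(CLINT p|lborel. h p * fourier_kernel p x) = cnj (CLINT y|lborel. g y * gauss_kernel \<sigma> (y - x))" for x
  proof -
    have "(CLINT p|lborel. h p * fourier_kernel p x)
        = (CLINT p|lborel. cnj (G p * (gauss (\<sigma> * p) * fourier_kernel p (- x))))"
      by (simp add: h_def cnj_fourier_kernel fourier_kernel_minus mult.assoc)
    also have "\<dots> = cnj (CLINT y|lborel. g y * gauss_kernel \<sigma> (y - x))"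
      unfolding Bochner_Integration.integral_cnj G_def integral_fourier_gauss_damped[OF gi \<sigma>] ..
    finally show ?thesis .
  qed
  have "G p * h p = complex_of_real ((cmod (G p))\<^sup>2 * gauss (\<sigma> * p))" for p
    using complex_norm_square[of "G p"] by (simp add: h_def mult.assoc[symmetric])
  then have "complex_of_real (LINT p|lborel. (cmod (G p))\<^sup>2 * gauss (\<sigma> * p)) = (CLINT p|lborel. G p * h p)"
    by (simp only: integral_complex_of_real)
  also have "\<dots> = (CLINT x|lborel. g x * (CLINT p|lborel. h p * fourier_kernel p x))"
    unfolding G_def by (rule integral_fourier_kernel_swap[OF gi hi])
  also have "\<dots> = (CLINT x|lborel. g x * cnj (CLINT y|lborel. g y * gauss_kernel \<sigma> (y - x)))"
    by (simp only: inverse)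
  finally show "complex_of_real (LINT p|lborel. (cmod (G p))\<^sup>2 * gauss (\<sigma> * p))
      = (CLINT x|lborel. g x * cnj (CLINT y|lborel. g y * gauss_kernel \<sigma> (y - x)))" .
qed

lemma plancherel_ineq_gauss_weighted:
  fixes g :: "real \<Rightarrow> complex"
  assumes gi: "integrable lborel g" and \<sigma>: "\<sigma> > 0"
  shows "(\<integral>\<^sup>+p. ennreal ((cmod (CLINT x|lborel. g x * fourier_kernel p x))\<^sup>2 * gauss (\<sigma> * p)) \<partial>lborel)
       \<le> ennreal (2 * pi) * (\<integral>\<^sup>+x. ennreal ((cmod (g x))\<^sup>2) \<partial>lborel)"
proof -
  have [measurable]: "g \<in> borel_measurable borel" using gi by auto
  have "(\<integral>\<^sup>+p. ennreal ((cmod (CLINT x|lborel. g x * fourier_kernel p x))\<^sup>2 * gauss (\<sigma> * p)) \<partial>lborel)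
      = ennreal (LINT p|lborel. (cmod (CLINT x|lborel. g x * fourier_kernel p x))\<^sup>2 * gauss (\<sigma> * p))"
    using integral_norm_fourier_square_gauss(1)[OF gi \<sigma>] by (simp add: nn_integral_eq_integral gauss_nonneg)
  also have "\<dots> = ennreal (cmod (CLINT x|lborel. g x * cnj (CLINT y|lborel. g y * gauss_kernel \<sigma> (y - x))))"
    unfolding integral_norm_fourier_square_gauss(2)[OF gi \<sigma>, symmetric]
    by (simp add: Bochner_Integration.integral_nonneg gauss_nonneg)
  also have "\<dots> \<le> (\<integral>\<^sup>+x. ennreal (cmod (g x)) * ennreal (cmod (CLINT y|lborel. g y * gauss_kernel \<sigma> (y - x))) \<partial>lborel)"
    by (rule order_trans[OF ennreal_norm_integral_le]) (simp add: norm_mult ennreal_mult)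
  also have "\<dots> \<le> (\<integral>\<^sup>+x. ennreal (cmod (g x)) * (\<integral>\<^sup>+y. ennreal (cmod (g y) * gauss_kernel \<sigma> (y - x)) \<partial>lborel) \<partial>lborel)"
    using gauss_kernel_nonneg[OF \<sigma>]
    by (intro nn_integral_mono mult_left_mono order_trans[OF ennreal_norm_integral_le]) (simp_all add: norm_mult)
  also have "\<dots> = (\<integral>\<^sup>+x. \<integral>\<^sup>+y. ennreal (\<bar>cmod (g x)\<bar> * \<bar>cmod (g y)\<bar> * gauss_kernel \<sigma> (y - x)) \<partial>lborel \<partial>lborel)"
    by (simp add: nn_integral_cmult[symmetric] ennreal_mult[symmetric] gauss_kernel_nonneg[OF \<sigma>] mult.assoc)
  also have "\<dots> \<le> (\<integral>\<^sup>+t. ennreal (gauss_kernel \<sigma> t) \<partial>lborel) * (\<integral>\<^sup>+x. ennreal ((cmod (g x))\<^sup>2) \<partial>lborel)"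
    by (rule nn_integral_convolution_form_le) (simp_all add: gauss_kernel_nonneg[OF \<sigma>])
  also have "(\<integral>\<^sup>+t. ennreal (gauss_kernel \<sigma> t) \<partial>lborel) = ennreal (2 * pi)"
    by (rule nn_integral_gauss_kernel[OF \<sigma>])
  finally show ?thesis .
qed

lemma plancherel_ineq:
  fixes g :: "real \<Rightarrow> complex"
  assumes gi: "integrable lborel g"
  shows "(\<integral>\<^sup>+p. ennreal ((cmod (fourier_integral g p))\<^sup>2) \<partial>lborel) \<le> (\<integral>\<^sup>+x. ennreal ((cmod (g x))\<^sup>2) \<partial>lborel)"
    (is "_ \<le> ?Q")
proof -
  have [measurable]: "g \<in> borel_measurable borel" using gi by auto
  define G where "G p = (CLINT x|lborel. g x * fourier_kernel p x)" for p
  have [measurable]: "G \<in> borel_measurable borel" unfolding G_def[abs_def] by measurable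
  have FT_G: "(cmod (fourier_integral g p))\<^sup>2 = (cmod (G p))\<^sup>2 / (2 * pi)" for p
    by (simp add: fourier_integral_def G_def norm_divide power_divide)
  define u where "u n p = ennreal ((cmod (fourier_integral g p))\<^sup>2 * gauss (1 / Suc n * p))" for n p
  have [measurable]: "u n \<in> borel_measurable borel" for n unfolding u_def[abs_def] by measurable
  have u_le: "integral\<^sup>N lborel (u n) \<le> ?Q" for n
  proof -
    have "integral\<^sup>N lborel (u n)
        = (\<integral>\<^sup>+p. ennreal (1 / (2 * pi)) * ennreal ((cmod (G p))\<^sup>2 * gauss (1 / Suc n * p)) \<partial>lborel)"
      unfolding u_def[abs_def] by (intro nn_integral_cong) (simp add: FT_G ennreal_mult[symmetric] gauss_nonneg)
    also have "\<dots> = ennreal (1 / (2 * pi)) * (\<integral>\<^sup>+p. ennreal ((cmod (G p))\<^sup>2 * gauss (1 / Suc n * p)) \<partial>lborel)"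
      by (rule nn_integral_cmult) simp
    also have "\<dots> \<le> ennreal (1 / (2 * pi)) * (ennreal (2 * pi) * ?Q)"
      unfolding G_def by (intro mult_left_mono plancherel_ineq_gauss_weighted gi) simp_all
    also have "\<dots> = ?Q"
      by (simp add: mult.assoc[symmetric] ennreal_mult[symmetric])
    finally show ?thesis .
  qed
  have u_lim: "(\<lambda>n. u n p) \<longlonglongrightarrow> ennreal ((cmod (fourier_integral g p))\<^sup>2)" for p
  proof -
    have "(\<lambda>n. gauss (1 / Suc n * p)) \<longlonglongrightarrow> gauss (0 * p)"
      using continuous_on_gauss[of UNIV]
      by (intro continuous_on_tendsto_compose[where f = gauss] tendsto_mult tendsto_const
          LIMSEQ_Suc[OF lim_const_over_n]) auto
    then show ?thesis
      unfolding u_def by (intro tendsto_ennrealI) (auto dest: tendsto_mult_left[where c = "(cmod (fourier_integral g p))\<^sup>2"])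
  qed
  have "(\<integral>\<^sup>+p. ennreal ((cmod (fourier_integral g p))\<^sup>2) \<partial>lborel) = (\<integral>\<^sup>+p. liminf (\<lambda>n. u n p) \<partial>lborel)"
    by (intro nn_integral_cong lim_imp_Liminf[symmetric] u_lim) simp
  also have "\<dots> \<le> liminf (\<lambda>n. integral\<^sup>N lborel (u n))"
    by (rule nn_integral_liminf) simp
  also have "\<dots> \<le> ?Q"
    using u_le by (intro order_trans[OF Liminf_le_Limsup Limsup_bounded]) auto
  finally show ?thesis .
qed

section \<open>Square-integrable functions\<close>

definition L2_sqdist :: "(real \<Rightarrow> complex) \<Rightarrow> (real \<Rightarrow> complex) \<Rightarrow> ennreal" where
  "L2_sqdist F H = (\<integral>\<^sup>+x. ennreal ((cmod (F x - H x))\<^sup>2) \<partial>lborel)"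

lemma L2_sqdist_commute: "L2_sqdist F H = L2_sqdist H F"
  unfolding L2_sqdist_def by (simp add: norm_minus_commute)

lemma L2_sqdist_zero_right: "L2_sqdist F (\<lambda>_. 0) = (\<integral>\<^sup>+x. ennreal ((cmod (F x))\<^sup>2) \<partial>lborel)"
  unfolding L2_sqdist_def by simp

lemma L2_sqdist_triangle:
  assumes [measurable]: "F \<in> borel_measurable borel" "G \<in> borel_measurable borel" "H \<in> borel_measurable borel"
  shows "L2_sqdist F H \<le> 2 * L2_sqdist F G + 2 * L2_sqdist G H"
proof -
  have "ennreal ((cmod (F x - H x))\<^sup>2) \<le> 2 * ennreal ((cmod (F x - G x))\<^sup>2) + 2 * ennreal ((cmod (G x - H x))\<^sup>2)"
    for x
  proof -
    have "cmod (F x - H x) \<le> cmod (F x - G x) + cmod (G x - H x)"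
      using norm_triangle_ineq[of "F x - G x" "G x - H x"] by simp
    then have "(cmod (F x - H x))\<^sup>2 \<le> (cmod (F x - G x) + cmod (G x - H x))\<^sup>2"
      by (simp add: power_mono)
    also have "\<dots> \<le> 2 * (cmod (F x - G x))\<^sup>2 + 2 * (cmod (G x - H x))\<^sup>2"
      using sum_squares_bound[of "cmod (F x - G x)" "cmod (G x - H x)"] by (simp add: power2_sum)
    finally show ?thesis
      by (auto dest: ennreal_leI simp: ennreal_plus ennreal_mult)
  qed
  then have "L2_sqdist F H \<le> (\<integral>\<^sup>+x. 2 * ennreal ((cmod (F x - G x))\<^sup>2) + 2 * ennreal ((cmod (G x - H x))\<^sup>2) \<partial>lborel)"
    unfolding L2_sqdist_def
    by (intro nn_integral_mono)
  also have "\<dots> = 2 * L2_sqdist F G + 2 * L2_sqdist G H"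
    unfolding L2_sqdist_def by (simp add: nn_integral_add nn_integral_cmult)
  finally show ?thesis .
qed

lemma AE_eq_if_L2_sqdist_eq_0:
  assumes [measurable]: "F \<in> borel_measurable borel" "G \<in> borel_measurable borel"
    and "L2_sqdist F G = 0"
  shows "AE x in lborel. F x = G x"
proof -
  have "AE x in lborel. ennreal ((cmod (F x - G x))\<^sup>2) = 0"
    using assms(3) unfolding L2_sqdist_def by (subst (asm) nn_integral_0_iff_AE) auto
  then show ?thesis by eventually_elim simp
qed

lemma L2_sqdist_limit_unique:
  fixes T :: "'i \<Rightarrow> real \<Rightarrow> complex"
  assumes "F \<noteq> bot"
    and [measurable]: "G \<in> borel_measurable borel" "H \<in> borel_measurable borel" "\<And>i. T i \<in> borel_measurable borel"
    and G: "((\<lambda>i. L2_sqdist G (T i)) \<longlongrightarrow> 0) F" and H: "((\<lambda>i. L2_sqdist H (T i)) \<longlongrightarrow> 0) F"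
  shows "AE x in lborel. G x = H x"
proof (rule AE_eq_if_L2_sqdist_eq_0)
  have "((\<lambda>i. 2 * L2_sqdist G (T i) + 2 * L2_sqdist H (T i)) \<longlongrightarrow> 0) F"
    using tendsto_add[OF ennreal_tendsto_cmult[OF _ G] ennreal_tendsto_cmult[OF _ H]] by simp
  moreover have "\<forall>\<^sub>F i in F. L2_sqdist G H \<le> 2 * L2_sqdist G (T i) + 2 * L2_sqdist H (T i)"
    using L2_sqdist_triangle[of G "T _" H] by (auto simp: L2_sqdist_commute)
  ultimately have "L2_sqdist G H \<le> 0"
    using tendsto_le[OF \<open>F \<noteq> bot\<close> _ tendsto_const] by blast
  then show "L2_sqdist G H = 0" by simp
qed simp_all

lemma L2_complex_iff:
  "L2_complex g \<longleftrightarrow> g \<in> borel_measurable borel \<and> L2_sqdist g (\<lambda>_. 0) < \<infinity>"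
  unfolding L2_complex_def L2_sqdist_zero_right by (auto simp: integrable_iff_bounded)

lemma L2_complex_measurable: "L2_complex g \<Longrightarrow> g \<in> borel_measurable borel"
  unfolding L2_complex_iff by simp

lemma L2_complex_if_L2_sqdist_finite:
  assumes g: "L2_complex g" and [measurable]: "G \<in> borel_measurable borel"
    and fin: "L2_sqdist G g < \<infinity>"
  shows "L2_complex G"
proof -
  have [measurable]: "g \<in> borel_measurable borel" using g by (rule L2_complex_measurable)
  have "L2_sqdist G (\<lambda>_. 0) \<le> 2 * L2_sqdist G g + 2 * L2_sqdist g (\<lambda>_. 0)"
    by (rule L2_sqdist_triangle) simp_all
  also have "\<dots> < \<infinity>"
    using fin g by (simp add: L2_complex_iff ennreal_mult_less_top)
  finally show ?thesis unfolding L2_complex_iff by simp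
qed

lemma L2_complex_diff:
  assumes "L2_complex g" "L2_complex h"
  shows "L2_complex (\<lambda>x. g x - h x)"
proof -
  have [measurable]: "g \<in> borel_measurable borel" "h \<in> borel_measurable borel"
    using assms by (simp_all add: L2_complex_measurable)
  have "L2_sqdist g h \<le> 2 * L2_sqdist g (\<lambda>_. 0) + 2 * L2_sqdist (\<lambda>_. 0) h"
    by (rule L2_sqdist_triangle) simp_all
  also have "\<dots> < \<infinity>"
    using assms by (simp add: L2_complex_iff L2_sqdist_commute[of "\<lambda>_. 0"] ennreal_mult_less_top)
  finally show ?thesis
    unfolding L2_complex_iff by (simp add: L2_sqdist_def)
qed

lemma L2_complex_cnj: "L2_complex g \<Longrightarrow> L2_complex (\<lambda>x. cnj (g x))"
  using borel_measurable_cnj[of g lborel] by (simp add: L2_complex_def)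

lemma integrable_mult_L2:
  assumes "L2_complex g" "L2_complex h"
  shows "integrable lborel (\<lambda>x. g x * h x)"
proof (rule Bochner_Integration.integrable_bound)
  show "integrable lborel (\<lambda>x. (cmod (g x))\<^sup>2 + (cmod (h x))\<^sup>2)"
    using assms unfolding L2_complex_def by simp
  have "cmod (g x) * cmod (h x) \<le> (cmod (g x))\<^sup>2 + (cmod (h x))\<^sup>2" for x
    using sum_squares_bound[of "cmod (g x)" "cmod (h x)"] mult_nonneg_nonneg[OF norm_ge_zero norm_ge_zero, of "g x" "h x"]
    by linarith
  then show "AE x in lborel. norm (g x * h x) \<le> norm ((cmod (g x))\<^sup>2 + (cmod (h x))\<^sup>2)"
    by (simp add: norm_mult)
qed (simp add: borel_measurable_times L2_complex_measurable assms)

lemma L2_cauchy_schwarz: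
  assumes "L2_complex g" "L2_complex h"
  shows "(LINT x|lborel. cmod (g x) * cmod (h x))
       \<le> sqrt (LINT x|lborel. (cmod (g x))\<^sup>2) * sqrt (LINT x|lborel. (cmod (h x))\<^sup>2)"
proof -
  have [measurable]: "g \<in> borel_measurable borel" "h \<in> borel_measurable borel"
    using assms by (simp_all add: L2_complex_measurable)
  have gh: "integrable lborel (\<lambda>x. cmod (g x) * cmod (h x))"
    using integrable_mult_L2[OF assms] by (simp add: norm_mult[symmetric])
  have g2: "integrable lborel (\<lambda>x. (cmod (g x))\<^sup>2)" and h2: "integrable lborel (\<lambda>x. (cmod (h x))\<^sup>2)"
    using assms unfolding L2_complex_def by simp_all
  have nn_eq: "(\<integral>\<^sup>+x. ennreal (f x) \<partial>lborel) = ennreal (LINT x|lborel. f x)"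
    if "integrable lborel f" "\<And>x. f x \<ge> 0" for f :: "real \<Rightarrow> real"
    using that by (simp add: nn_integral_eq_integral)
  have "ennreal ((LINT x|lborel. cmod (g x) * cmod (h x))\<^sup>2)
      = (\<integral>\<^sup>+x. ennreal (cmod (g x) * cmod (h x)) \<partial>lborel)\<^sup>2"
    using gh by (simp add: nn_eq ennreal_power Bochner_Integration.integral_nonneg)
  also have "\<dots> \<le> (\<integral>\<^sup>+x. ennreal (cmod (g x)) ^ 2 \<partial>lborel) * (\<integral>\<^sup>+x. ennreal (cmod (h x)) ^ 2 \<partial>lborel)"
    unfolding ennreal_mult[OF norm_ge_zero norm_ge_zero] by (rule Cauchy_Schwarz_nn_integral) simp_all
  also have "\<dots> = ennreal ((LINT x|lborel. (cmod (g x))\<^sup>2) * (LINT x|lborel. (cmod (h x))\<^sup>2))"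
  proof -
    have "(\<integral>\<^sup>+x. ennreal (cmod (f x)) ^ 2 \<partial>lborel) = ennreal (LINT x|lborel. (cmod (f x))\<^sup>2)"
      if "integrable lborel (\<lambda>x. (cmod (f x))\<^sup>2)" for f :: "real \<Rightarrow> complex"
    proof -
      have "(\<integral>\<^sup>+x. ennreal (cmod (f x)) ^ 2 \<partial>lborel) = (\<integral>\<^sup>+x. ennreal ((cmod (f x))\<^sup>2) \<partial>lborel)"
        by (simp add: ennreal_power)
      with that show ?thesis by (simp add: nn_eq)
    qed
    then show ?thesis using g2 h2 by (simp add: ennreal_mult Bochner_Integration.integral_nonneg)
  qed
  finally have "(LINT x|lborel. cmod (g x) * cmod (h x))\<^sup>2 \<le> (LINT x|lborel. (cmod (g x))\<^sup>2) * (LINT x|lborel. (cmod (h x))\<^sup>2)"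
    by (simp add: ennreal_le_iff Bochner_Integration.integral_nonneg)
  then show ?thesis
    by (simp add: real_le_rsqrt real_sqrt_mult[symmetric])
qed

lemma convergent_if_weighted_diff_square_bounded:
  fixes f :: "nat \<Rightarrow> 'a::banach"
  assumes bound: "\<And>n. 2 ^ n * (norm (f (Suc n) - f n))\<^sup>2 \<le> c"
  shows "convergent f"
proof -
  have step_le: "norm (f (Suc n) - f n) \<le> sqrt c * sqrt (1 / 2) ^ n" for n
  proof -
    have "(norm (f (Suc n) - f n))\<^sup>2 = 2 ^ n * (norm (f (Suc n) - f n))\<^sup>2 * (1 / 2) ^ n"
      by (simp add: power_one_over)
    also have "\<dots> \<le> c * (1 / 2) ^ n"
      using bound by (rule mult_right_mono) simp
    finally have "norm (f (Suc n) - f n) \<le> sqrt (c * (1 / 2) ^ n)"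
      by (rule real_le_rsqrt)
    then show ?thesis
      by (simp add: real_sqrt_mult real_sqrt_power)
  qed
  have "summable (\<lambda>n. sqrt c * sqrt (1 / 2 :: real) ^ n)"
    by (intro summable_mult summable_geometric) (simp add: real_sqrt_less_iff)
  then have "summable (\<lambda>n. norm (f (Suc n) - f n))"
    by (rule summable_comparison_test[rotated]) (use step_le in auto)
  then have "convergent (\<lambda>n. \<Sum>k<n. f (Suc k) - f k)"
    using summable_norm_cancel by (simp add: summable_iff_convergent)
  then have "convergent (\<lambda>n. (f n - f 0) + f 0)"
    by (intro convergent_add convergent_const) (simp add: sum_lessThan_telescope)
  then show ?thesis by simp
qed

lemma AE_convergent_if_L2_sqdist_geometric:
  fixes g :: "nat \<Rightarrow> real \<Rightarrow> complex"
  assumes [measurable]: "\<And>n. g n \<in> borel_measurable borel"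
    and step: "\<And>n. L2_sqdist (g (Suc n)) (g n) \<le> ennreal ((1 / 4) ^ n)"
  shows "AE x in lborel. convergent (\<lambda>n. g n x)"
proof -
  define S where "S x = (\<Sum>n. ennreal (2 ^ n * (cmod (g (Suc n) x - g n x))\<^sup>2))" for x
  have [measurable]: "S \<in> borel_measurable borel" unfolding S_def[abs_def] by measurable
  have "integral\<^sup>N lborel S = (\<Sum>n. ennreal (2 ^ n) * L2_sqdist (g (Suc n)) (g n))"
    unfolding S_def L2_sqdist_def
    by (simp add: nn_integral_suminf ennreal_mult nn_integral_cmult)
  also have "\<dots> \<le> (\<Sum>n. ennreal ((1 / 2) ^ n))"
  proof (intro suminf_le summableI)
    fix n
    have "ennreal (2 ^ n) * L2_sqdist (g (Suc n)) (g n) \<le> ennreal (2 ^ n) * ennreal ((1 / 4) ^ n)"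
      using step by (rule mult_left_mono) simp
    also have "\<dots> = ennreal ((1 / 2) ^ n)"
      by (simp add: ennreal_mult[symmetric] power_mult_distrib[symmetric])
    finally show "ennreal (2 ^ n) * L2_sqdist (g (Suc n)) (g n) \<le> ennreal ((1 / 2) ^ n)" .
  qed
  also have "\<dots> = ennreal (\<Sum>n. (1 / 2) ^ n)"
    by (rule suminf_ennreal2) simp_all
  finally have "integral\<^sup>N lborel S \<noteq> \<infinity>"
    by (auto simp: top_unique)
  then have "AE x in lborel. S x \<noteq> \<infinity>"
    by (intro nn_integral_PInf_AE) simp_all
  then show ?thesis
  proof eventually_elim
    case (elim x)
    have "2 ^ n * (cmod (g (Suc n) x - g n x))\<^sup>2 \<le> enn2real (S x)" for n
    proof -
      have "(\<Sum>k\<in>{n}. ennreal (2 ^ k * (cmod (g (Suc k) x - g k x))\<^sup>2)) \<le> S x"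
        unfolding S_def by (rule sum_le_suminf) simp_all
      then have "enn2real (ennreal (2 ^ n * (cmod (g (Suc n) x - g n x))\<^sup>2)) \<le> enn2real (S x)"
        using elim by (intro enn2real_mono) (simp_all add: less_top)
      then show ?thesis by simp
    qed
    then show ?case by (rule convergent_if_weighted_diff_square_bounded)
  qed
qed

lemma L2_sqdist_le_liminf:
  fixes g :: "nat \<Rightarrow> real \<Rightarrow> complex"
  assumes [measurable]: "\<And>n. g n \<in> borel_measurable borel" "H \<in> borel_measurable borel"
    and lim: "AE x in lborel. (\<lambda>n. g n x) \<longlonglongrightarrow> G x"
  shows "L2_sqdist G H \<le> liminf (\<lambda>n. L2_sqdist (g n) H)"
proof -
  have "L2_sqdist G H = (\<integral>\<^sup>+x. liminf (\<lambda>n. ennreal ((cmod (g n x - H x))\<^sup>2)) \<partial>lborel)"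
    unfolding L2_sqdist_def using lim
  proof (intro nn_integral_cong_AE, eventually_elim)
    case (elim x)
    then have "(\<lambda>n. ennreal ((cmod (g n x - H x))\<^sup>2)) \<longlonglongrightarrow> ennreal ((cmod (G x - H x))\<^sup>2)"
      by (intro tendsto_ennrealI tendsto_intros)
    then show ?case by (rule lim_imp_Liminf[symmetric, rotated]) simp
  qed
  also have "\<dots> \<le> liminf (\<lambda>n. L2_sqdist (g n) H)"
    unfolding L2_sqdist_def by (rule nn_integral_liminf) simp
  finally show ?thesis .
qed

lemma tendsto_at_top_radii_geometric:
  fixes \<tau> :: "real \<Rightarrow> ennreal"
  assumes \<tau>: "(\<tau> \<longlongrightarrow> 0) at_top"
  shows "\<exists>Rs. (\<forall>n. Rs n \<le> Rs (Suc n)) \<and> (\<forall>n. real n \<le> Rs n) \<and> (\<forall>n. \<tau> (Rs n) < ennreal ((1 / 4) ^ n))"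
proof -
  have "\<exists>M. \<forall>R\<ge>M. \<tau> R < ennreal ((1 / 4) ^ n)" for n
    using order_tendstoD(2)[OF \<tau>, of "ennreal ((1 / 4) ^ n)"] by (simp add: eventually_at_top_linorder)
  then obtain M where M: "\<And>n R. R \<ge> M n \<Longrightarrow> \<tau> R < ennreal ((1 / 4) ^ n)" by metis
  define Rs where "Rs n = (\<Sum>k\<le>n. \<bar>M k\<bar>) + real n" for n
  have "M n \<le> Rs n" for n
    using member_le_sum[of n "{..n}" "\<lambda>k. \<bar>M k\<bar>"] unfolding Rs_def by auto
  moreover have "real n \<le> Rs n" for n
    unfolding Rs_def by (simp add: sum_nonneg)
  moreover have "Rs n \<le> Rs (Suc n)" for n
    unfolding Rs_def by simp
  ultimately show ?thesis using M by blast
qed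

lemma L2_complete_at_top:
  fixes T :: "real \<Rightarrow> real \<Rightarrow> complex" and \<tau> :: "real \<Rightarrow> ennreal"
  assumes [measurable]: "\<And>R. T R \<in> borel_measurable borel"
    and cauchy: "\<And>R S. R \<le> S \<Longrightarrow> L2_sqdist (T R) (T S) \<le> \<tau> R"
    and \<tau>: "(\<tau> \<longlongrightarrow> 0) at_top"
  shows "\<exists>G. G \<in> borel_measurable borel \<and> ((\<lambda>R. L2_sqdist G (T R)) \<longlongrightarrow> 0) at_top"
proof -
  obtain Rs where Rs_Suc: "\<And>n. Rs n \<le> Rs (Suc n)" and Rs_ge_n: "\<And>n. real n \<le> Rs n"
    and Rs_small: "\<And>n. \<tau> (Rs n) < ennreal ((1 / 4) ^ n)"
    using tendsto_at_top_radii_geometric[OF \<tau>] by blast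
  define g where "g n = T (Rs n)" for n
  have [measurable]: "g n \<in> borel_measurable borel" for n unfolding g_def by simp
  have "L2_sqdist (g (Suc n)) (g n) \<le> ennreal ((1 / 4) ^ n)" for n
    using cauchy[OF Rs_Suc[of n]] Rs_small[of n] unfolding g_def
    by (simp add: L2_sqdist_commute)
  then have "AE x in lborel. convergent (\<lambda>n. g n x)"
    by (intro AE_convergent_if_L2_sqdist_geometric) simp
  then have G_lim: "AE x in lborel. (\<lambda>n. g n x) \<longlonglongrightarrow> lim (\<lambda>n. g n x)"
    by eventually_elim (simp add: convergent_LIMSEQ_iff)
  define G where "G x = lim (\<lambda>n. g n x)" for x
  have [measurable]: "G \<in> borel_measurable borel" unfolding G_def[abs_def] by measurable
  have bound: "L2_sqdist G (T R) \<le> \<tau> R" for R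
  proof -
    have "L2_sqdist G (T R) \<le> liminf (\<lambda>n. L2_sqdist (g n) (T R))"
      using G_lim unfolding G_def by (intro L2_sqdist_le_liminf) simp_all
    also have "\<dots> \<le> \<tau> R"
    proof (intro order_trans[OF Liminf_le_Limsup Limsup_bounded])
      show "\<forall>\<^sub>F n in sequentially. L2_sqdist (g n) (T R) \<le> \<tau> R"
        unfolding eventually_sequentially
      proof (intro exI allI impI)
        fix n assume "nat \<lceil>R\<rceil> \<le> n"
        then have "R \<le> Rs n" using Rs_ge_n[of n] by linarith
        then show "L2_sqdist (g n) (T R) \<le> \<tau> R"
          unfolding g_def by (simp add: L2_sqdist_commute cauchy)
      qed
    qed simp
    finally show ?thesis .
  qed
  have "((\<lambda>R. L2_sqdist G (T R)) \<longlongrightarrow> 0) at_top"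
    by (rule tendsto_sandwich[of "\<lambda>_. 0" _ _ \<tau>]) (use bound \<tau> in auto)
  then show ?thesis using \<open>G \<in> borel_measurable borel\<close> by blast
qed

section \<open>The L2 Fourier transform\<close>

lemma integrable_truncation:
  assumes g: "L2_complex g"
  shows "integrable lborel (\<lambda>x. indicator {-R..R} x * g x)"
proof (rule Bochner_Integration.integrable_bound)
  show "integrable lborel (\<lambda>x. indicator {-R..R} x + (cmod (g x))\<^sup>2)"
    using g unfolding L2_complex_def
    by (intro Bochner_Integration.integrable_add integrable_real_indicator) (auto simp: emeasure_lborel_Icc_eq)
  have "cmod (g x) \<le> 1 + (cmod (g x))\<^sup>2" for x
    using sum_squares_bound[of 1 "cmod (g x)"] norm_ge_zero[of "g x"] by (simp only: power_one mult_1)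
  then show "AE x in lborel. norm (indicator {-R..R} x * g x) \<le> norm (indicator {-R..R} x + (cmod (g x))\<^sup>2)"
    by (intro AE_I2) (auto simp: indicator_def norm_mult)
qed (use L2_complex_measurable[OF g] in simp)

definition truncated_fourier :: "real \<Rightarrow> (real \<Rightarrow> complex) \<Rightarrow> real \<Rightarrow> complex" where
  "truncated_fourier R g = fourier_integral (\<lambda>x. indicator {-R..R} x * g x)"

lemma truncated_fourier_measurable [measurable]:
  "g \<in> borel_measurable borel \<Longrightarrow> truncated_fourier R g \<in> borel_measurable borel"
  unfolding truncated_fourier_def by (rule fourier_integral_measurable) simp

lemma nn_integral_truncated_fourier_le:
  assumes g: "L2_complex g"
  shows "(\<integral>\<^sup>+p. ennreal ((cmod (truncated_fourier R g p))\<^sup>2) \<partial>lborel) \<le> (\<integral>\<^sup>+x. ennreal ((cmod (g x))\<^sup>2) \<partial>lborel)"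
proof -
  have [measurable]: "g \<in> borel_measurable borel" using g by (rule L2_complex_measurable)
  have "(\<integral>\<^sup>+p. ennreal ((cmod (truncated_fourier R g p))\<^sup>2) \<partial>lborel)
      \<le> (\<integral>\<^sup>+x. ennreal ((cmod (indicator {-R..R} x * g x))\<^sup>2) \<partial>lborel)"
    unfolding truncated_fourier_def by (rule plancherel_ineq[OF integrable_truncation[OF g]])
  also have "\<dots> \<le> (\<integral>\<^sup>+x. ennreal ((cmod (g x))\<^sup>2) \<partial>lborel)"
    by (intro nn_integral_mono ennreal_leI) (auto simp: indicator_def)
  finally show ?thesis .
qed

lemma L2_complex_truncated_fourier:
  assumes g: "L2_complex g"
  shows "L2_complex (truncated_fourier R g)"
  using g nn_integral_truncated_fourier_le[OF g, of R] L2_complex_measurable[OF g]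
  by (simp add: L2_complex_iff L2_sqdist_zero_right)

lemma truncated_fourier_L2_sqdist_le:
  assumes g: "L2_complex g" and "R \<le> S"
  shows "L2_sqdist (truncated_fourier R g) (truncated_fourier S g)
       \<le> (\<integral>\<^sup>+x. ennreal ((cmod (g x))\<^sup>2 * indicator {x. R < \<bar>x\<bar>} x) \<partial>lborel)"
proof -
  have [measurable]: "g \<in> borel_measurable borel" using g by (rule L2_complex_measurable)
  define h where "h x = (indicator {-S..S} x - indicator {-R..R} x) * g x" for x
  have diff: "truncated_fourier S g p - truncated_fourier R g p = fourier_integral h p" for p
    unfolding truncated_fourier_def h_def left_diff_distrib
    by (rule fourier_integral_diff[symmetric]) (simp_all add: integrable_truncation g)
  then have "L2_sqdist (truncated_fourier R g) (truncated_fourier S g)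
      = (\<integral>\<^sup>+p. ennreal ((cmod (fourier_integral h p))\<^sup>2) \<partial>lborel)"
    unfolding L2_sqdist_def by (intro nn_integral_cong) (metis diff norm_minus_commute)
  also have "\<dots> \<le> (\<integral>\<^sup>+x. ennreal ((cmod (h x))\<^sup>2) \<partial>lborel)"
    unfolding h_def left_diff_distrib
    by (intro plancherel_ineq Bochner_Integration.integrable_diff integrable_truncation g)
  also have "\<dots> \<le> (\<integral>\<^sup>+x. ennreal ((cmod (g x))\<^sup>2 * indicator {x. R < \<bar>x\<bar>} x) \<partial>lborel)"
    using \<open>R \<le> S\<close> by (intro nn_integral_mono ennreal_leI) (auto simp: h_def indicator_def)
  finally show ?thesis .
qed

lemma tendsto_nn_integral_tail:
  assumes g: "L2_complex g"
  shows "((\<lambda>R. \<integral>\<^sup>+x. ennreal ((cmod (g x))\<^sup>2 * indicator {x. R < \<bar>x\<bar>} x) \<partial>lborel) \<longlongrightarrow> 0) at_top"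
proof -
  have [measurable]: "g \<in> borel_measurable borel" using g by (rule L2_complex_measurable)
  have g2: "integrable lborel (\<lambda>x. (cmod (g x))\<^sup>2)" using g unfolding L2_complex_def by simp
  have tail_integrable: "integrable lborel (\<lambda>x. (cmod (g x))\<^sup>2 * indicator {x. R < \<bar>x\<bar>} x)" for R
    by (rule Bochner_Integration.integrable_bound[OF g2]) (auto simp: indicator_def)
  have lim: "AE x in lborel. ((\<lambda>R. (cmod (g x))\<^sup>2 * indicator {x. R < \<bar>x\<bar>} x) \<longlongrightarrow> 0) at_top"
  proof (intro AE_I2 tendsto_eventually)
    fix x
    show "\<forall>\<^sub>F R in at_top. (cmod (g x))\<^sup>2 * indicator {x. R < \<bar>x\<bar>} x = 0"
      unfolding eventually_at_top_linorder by (intro exI[of _ "\<bar>x\<bar>"]) auto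
  qed
  have dom: "\<forall>\<^sub>F R in at_top. AE x in lborel.
      norm ((cmod (g x))\<^sup>2 * indicator {x. R < \<bar>x\<bar>} x) \<le> (cmod (g x))\<^sup>2"
    by (intro always_eventually allI AE_I2) (simp add: indicator_def)
  have "((\<lambda>R. LINT x|lborel. (cmod (g x))\<^sup>2 * indicator {x. R < \<bar>x\<bar>} x) \<longlongrightarrow> (LINT (x::real)|lborel. 0)) at_top"
    by (rule integral_dominated_convergence_at_top[OF _ _ g2 lim dom]) simp_all
  then have "((\<lambda>R. ennreal (LINT x|lborel. (cmod (g x))\<^sup>2 * indicator {x. R < \<bar>x\<bar>} x)) \<longlongrightarrow> ennreal 0) at_top"
    by (intro tendsto_ennrealI) simp
  moreover have "(\<integral>\<^sup>+x. ennreal ((cmod (g x))\<^sup>2 * indicator {x. R < \<bar>x\<bar>} x) \<partial>lborel)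
      = ennreal (LINT x|lborel. (cmod (g x))\<^sup>2 * indicator {x. R < \<bar>x\<bar>} x)" for R
    by (rule nn_integral_eq_integral[OF tail_integrable]) simp
  ultimately show ?thesis by simp
qed

definition has_L2_fourier_complex :: "(real \<Rightarrow> complex) \<Rightarrow> (real \<Rightarrow> complex) \<Rightarrow> bool" where
  "has_L2_fourier_complex g G \<longleftrightarrow>
     L2_complex G \<and> ((\<lambda>R. L2_sqdist G (truncated_fourier R g)) \<longlongrightarrow> 0) at_top"

lemma has_L2_fourier_complex_exists:
  assumes g: "L2_complex g"
  shows "\<exists>G. has_L2_fourier_complex g G"
proof -
  have [measurable]: "g \<in> borel_measurable borel" using g by (rule L2_complex_measurable)
  obtain G where [measurable]: "G \<in> borel_measurable borel"
    and lim: "((\<lambda>R. L2_sqdist G (truncated_fourier R g)) \<longlongrightarrow> 0) at_top"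
    using L2_complete_at_top[of "\<lambda>R. truncated_fourier R g", OF _ truncated_fourier_L2_sqdist_le[OF g]
        tendsto_nn_integral_tail[OF g]]
    by auto
  obtain R where "L2_sqdist G (truncated_fourier R g) < 1"
    using order_tendstoD(2)[OF lim, of 1] by (auto simp: eventually_at_top_linorder)
  then have "L2_sqdist G (truncated_fourier R g) < \<infinity>"
    by (rule order.strict_trans) simp
  then have "L2_complex G"
    using L2_complex_if_L2_sqdist_finite[OF L2_complex_truncated_fourier[OF g]] by simp
  with lim show ?thesis unfolding has_L2_fourier_complex_def by blast
qed

lemma has_L2_fourier_complex_unique:
  assumes "has_L2_fourier_complex g G" "has_L2_fourier_complex g H" "g \<in> borel_measurable borel"
  shows "AE p in lborel. G p = H p"
  using assms unfolding has_L2_fourier_complex_def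
  by (intro L2_sqdist_limit_unique[where F = at_top and T = "\<lambda>R. truncated_fourier R g"])
     (simp_all add: L2_complex_measurable)

lemma tendsto_integral_mult_if_L2_sqdist:
  fixes T :: "'i \<Rightarrow> real \<Rightarrow> complex"
  assumes G: "L2_complex G" and T: "\<And>i. L2_complex (T i)" and k: "L2_complex k"
    and lim: "((\<lambda>i. L2_sqdist G (T i)) \<longlongrightarrow> 0) F"
  shows "((\<lambda>i. CLINT x|lborel. T i x * k x) \<longlongrightarrow> (CLINT x|lborel. G x * k x)) F"
proof -
  define r where "r i = (LINT x|lborel. (cmod (G x - T i x))\<^sup>2)" for i
  have diff: "L2_complex (\<lambda>x. G x - T i x)" for i by (rule L2_complex_diff[OF G T])
  have "L2_sqdist G (T i) = ennreal (r i)" for i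
    using diff[of i] unfolding L2_sqdist_def r_def L2_complex_def by (simp add: nn_integral_eq_integral)
  with lim have "((\<lambda>i. ennreal (r i)) \<longlongrightarrow> ennreal 0) F"
    by simp
  then have "(r \<longlongrightarrow> 0) F"
    by (subst (asm) tendsto_ennreal_iff) (auto simp: r_def Bochner_Integration.integral_nonneg)
  then have bound_lim: "((\<lambda>i. sqrt (r i) * sqrt (LINT x|lborel. (cmod (k x))\<^sup>2)) \<longlongrightarrow> 0) F"
    using tendsto_mult_right[OF tendsto_real_sqrt] by fastforce
  have bound: "norm ((CLINT x|lborel. T i x * k x) - (CLINT x|lborel. G x * k x))
      \<le> sqrt (r i) * sqrt (LINT x|lborel. (cmod (k x))\<^sup>2)" for i
  proof -
    have "(CLINT x|lborel. T i x * k x) - (CLINT x|lborel. G x * k x) = - (CLINT x|lborel. (G x - T i x) * k x)"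
      using integrable_mult_L2[OF T k] integrable_mult_L2[OF G k] by (simp add: left_diff_distrib)
    then have "norm ((CLINT x|lborel. T i x * k x) - (CLINT x|lborel. G x * k x))
        \<le> (LINT x|lborel. cmod (G x - T i x) * cmod (k x))"
      using integral_norm_bound[of lborel "\<lambda>x. (G x - T i x) * k x"] by (simp add: norm_mult)
    also have "\<dots> \<le> sqrt (r i) * sqrt (LINT x|lborel. (cmod (k x))\<^sup>2)"
      unfolding r_def by (rule L2_cauchy_schwarz[OF diff k])
    finally show ?thesis .
  qed
  have "((\<lambda>i. (CLINT x|lborel. T i x * k x) - (CLINT x|lborel. G x * k x)) \<longlongrightarrow> 0) F"
    by (rule Lim_null_comparison[OF always_eventually[OF allI[OF bound]] bound_lim])
  then show ?thesis by (rule LIM_zero_cancel)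
qed

lemma integral_truncated_fourier_mult:
  assumes g: "L2_complex g" and k: "integrable lborel k"
  shows "(CLINT p|lborel. truncated_fourier R g p * k p)
       = (CLINT x|lborel. indicator {-R..R} x * g x * fourier_integral k x)"
proof -
  have "(CLINT p|lborel. truncated_fourier R g p * k p)
      = (CLINT p|lborel. complex_of_real (1 / sqrt (2 * pi)) *
          ((CLINT x|lborel. indicator {-R..R} x * g x * fourier_kernel p x) * k p))"
    unfolding truncated_fourier_def fourier_integral_def by (simp add: mult.assoc)
  also have "\<dots> = complex_of_real (1 / sqrt (2 * pi)) *
      (CLINT x|lborel. indicator {-R..R} x * g x * (CLINT p|lborel. k p * fourier_kernel p x))"
    by (simp add: integral_fourier_kernel_swap[OF integrable_truncation[OF g] k])
  also have "\<dots> = (CLINT x|lborel. indicator {-R..R} x * g x * fourier_integral k x)"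
    by (simp add: fourier_integral_def fourier_kernel_commute[of _ "_ :: real"] ac_simps)
  finally show ?thesis .
qed

lemma has_L2_fourier_complex_duality:
  assumes G: "has_L2_fourier_complex g G" and g: "L2_complex g"
    and k: "integrable lborel k" "L2_complex k" and Fk: "L2_complex (fourier_integral k)"
  shows "(CLINT p|lborel. G p * k p) = (CLINT x|lborel. g x * fourier_integral k x)"
proof (rule tendsto_unique[OF trivial_limit_at_top_linorder])
  show "((\<lambda>R. CLINT p|lborel. truncated_fourier R g p * k p) \<longlongrightarrow> (CLINT p|lborel. G p * k p)) at_top"
    using G g k by (intro tendsto_integral_mult_if_L2_sqdist)
      (simp_all add: has_L2_fourier_complex_def L2_complex_truncated_fourier)
  have [measurable]: "g \<in> borel_measurable borel" "fourier_integral k \<in> borel_measurable borel"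
    using g Fk by (simp_all add: L2_complex_measurable)
  have "((\<lambda>R. CLINT x|lborel. indicator {-R..R} x * g x * fourier_integral k x)
      \<longlongrightarrow> (CLINT x|lborel. g x * fourier_integral k x)) at_top"
  proof (rule integral_dominated_convergence_at_top)
    show "integrable lborel (\<lambda>x. norm (g x * fourier_integral k x))"
      using integrable_mult_L2[OF g Fk] by simp
    show "AE x in lborel. ((\<lambda>R. indicator {-R..R} x * g x * fourier_integral k x)
        \<longlongrightarrow> g x * fourier_integral k x) at_top"
    proof (intro AE_I2 tendsto_eventually)
      fix x
      show "\<forall>\<^sub>F R in at_top. indicator {-R..R} x * g x * fourier_integral k x = g x * fourier_integral k x"
        unfolding eventually_at_top_linorder by (intro exI[of _ "\<bar>x\<bar>"]) (auto simp: indicator_def)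
    qed
    show "\<forall>\<^sub>F R in at_top. AE x in lborel.
        norm (indicator {-R..R} x * g x * fourier_integral k x) \<le> norm (g x * fourier_integral k x)"
      by (intro always_eventually allI AE_I2) (simp add: indicator_def norm_mult)
  qed simp_all
  then show "((\<lambda>R. CLINT p|lborel. truncated_fourier R g p * k p) \<longlongrightarrow> (CLINT x|lborel. g x * fourier_integral k x)) at_top"
    by (simp add: integral_truncated_fourier_mult[OF g k(1)])
qed

lemma L2_complex_if_gauss_bounded:
  assumes [measurable]: "h \<in> borel_measurable borel" and h: "\<And>x. cmod (h x) \<le> gauss (x + t)"
  shows "L2_complex h" and "integrable lborel h"
proof -
  have gi: "integrable lborel (\<lambda>x. gauss (x + t))"
    using integrable_gauss_affine[of 1 t] by (simp add: add.commute)
  show "integrable lborel h"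
    by (rule Bochner_Integration.integrable_bound[OF gi]) (simp_all add: h gauss_nonneg)
  have "(cmod (h x))\<^sup>2 \<le> gauss (x + t)" for x
  proof -
    have "(cmod (h x))\<^sup>2 \<le> (gauss (x + t))\<^sup>2" using h[of x] by (simp add: power_mono)
    also have "\<dots> \<le> gauss (x + t)"
      using mult_left_mono[OF gauss_le_1 gauss_nonneg, of "x + t" "x + t"] by (simp add: power2_eq_square)
    finally show ?thesis .
  qed
  then have "integrable lborel (\<lambda>x. (cmod (h x))\<^sup>2)"
    by (intro Bochner_Integration.integrable_bound[OF gi]) (simp_all add: gauss_nonneg)
  then show "L2_complex h" unfolding L2_complex_def by simp
qed

lemma gauss_modulated_L2:
  "L2_complex (\<lambda>p. complex_of_real (gauss p) * fourier_kernel t p)"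
  "integrable lborel (\<lambda>p. complex_of_real (gauss p) * fourier_kernel t p)"
  by (rule L2_complex_if_gauss_bounded[where t = 0]; simp add: norm_mult gauss_nonneg)+

lemma gauss_shifted_L2:
  "L2_complex (\<lambda>x. complex_of_real (gauss (x + s)))"
  "integrable lborel (\<lambda>x. complex_of_real (gauss (x + s)))"
  by (rule L2_complex_if_gauss_bounded[where t = s]; simp add: gauss_nonneg)+

lemma AE_zero_if_orthogonal_gauss_modulated:
  assumes d: "L2_complex d"
    and orth: "\<And>t. (CLINT x|lborel. d x * (complex_of_real (gauss x) * fourier_kernel t x)) = 0"
  shows "AE x in lborel. d x = 0"
proof -
  have "AE x in lborel. d x * complex_of_real (gauss x) = 0"
  proof (rule AE_zero_if_fourier_kernel_integrals_zero)
    show "integrable lborel (\<lambda>x. d x * complex_of_real (gauss x))"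
      using integrable_mult_L2[OF d gauss_shifted_L2(1)[of 0]] by simp
    show "(CLINT x|lborel. d x * complex_of_real (gauss x) * fourier_kernel p x) = 0" for p
      using orth[of p] by (simp add: mult.assoc)
  qed
  then show ?thesis by eventually_elim (simp add: gauss_pos[THEN less_imp_neq, symmetric])
qed

lemma has_L2_fourier_complex_gauss_duality:
  assumes "has_L2_fourier_complex g G" "L2_complex g"
  shows "(CLINT p|lborel. G p * (complex_of_real (gauss p) * fourier_kernel t p))
       = (CLINT x|lborel. g x * complex_of_real (gauss (x + t)))"
    and "(CLINT p|lborel. G p * complex_of_real (gauss (p + s)))
       = (CLINT x|lborel. g x * (complex_of_real (gauss x) * fourier_kernel (- s) x))"
  using has_L2_fourier_complex_duality[OF assms gauss_modulated_L2(2,1)]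
    has_L2_fourier_complex_duality[OF assms gauss_shifted_L2(2,1)]
  by (simp_all add: fourier_integral_gauss_modulated fourier_integral_gauss_shifted gauss_modulated_L2 gauss_shifted_L2)

lemma has_L2_fourier_complex_injective:
  assumes U: "has_L2_fourier_complex u U" "L2_complex u"
    and V: "has_L2_fourier_complex v V" "L2_complex v"
    and UV: "AE p in lborel. U p = V p"
  shows "AE x in lborel. u x = v x"
proof -
  have [measurable]: "U \<in> borel_measurable borel" "V \<in> borel_measurable borel"
    using U(1) V(1) by (simp_all add: has_L2_fourier_complex_def L2_complex_measurable)
  have "AE x in lborel. u x - v x = 0"
  proof (rule AE_zero_if_orthogonal_gauss_modulated)
    show "L2_complex (\<lambda>x. u x - v x)" by (rule L2_complex_diff[OF U(2) V(2)])
    fix t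
    have "(CLINT x|lborel. u x * (complex_of_real (gauss x) * fourier_kernel t x))
        = (CLINT p|lborel. U p * complex_of_real (gauss (p + - t)))"
      using has_L2_fourier_complex_gauss_duality(2)[OF U, of "- t"] by simp
    also have "\<dots> = (CLINT p|lborel. V p * complex_of_real (gauss (p + - t)))"
      using UV by (intro integral_cong_AE) auto
    also have "\<dots> = (CLINT x|lborel. v x * (complex_of_real (gauss x) * fourier_kernel t x))"
      using has_L2_fourier_complex_gauss_duality(2)[OF V, of "- t"] by simp
    finally show "(CLINT x|lborel. (u x - v x) * (complex_of_real (gauss x) * fourier_kernel t x)) = 0"
      using integrable_mult_L2[OF U(2) gauss_modulated_L2(1)] integrable_mult_L2[OF V(2) gauss_modulated_L2(1)]
      by (simp add: left_diff_distrib)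
  qed
  then show ?thesis by simp
qed

section \<open>Real functions\<close>

lemma L2_real_iff_L2_complex: "L2_real f \<longleftrightarrow> L2_complex (\<lambda>x. complex_of_real (f x))"
proof -
  have "f \<in> borel_measurable borel \<longleftrightarrow> (\<lambda>x. complex_of_real (f x)) \<in> borel_measurable borel"
  proof
    assume [measurable]: "(\<lambda>x. complex_of_real (f x)) \<in> borel_measurable borel"
    have "(\<lambda>x. Re (complex_of_real (f x))) \<in> borel_measurable borel" by measurable
    then show "f \<in> borel_measurable borel" by simp
  qed measurable
  then show ?thesis
    unfolding L2_real_def L2_complex_def by simp
qed

lemma L2_real_Re: "L2_complex V \<Longrightarrow> L2_real (\<lambda>x. Re (V x))"
proof -
  assume V: "L2_complex V"
  have [measurable]: "V \<in> borel_measurable borel" using V by (rule L2_complex_measurable)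
  have "(\<integral>\<^sup>+x. ennreal ((Re (V x))\<^sup>2) \<partial>lborel) \<le> (\<integral>\<^sup>+x. ennreal ((cmod (V x))\<^sup>2) \<partial>lborel)"
    by (intro nn_integral_mono ennreal_leI) (metis abs_Re_le_cmod abs_ge_zero power2_abs power_mono)
  also have "\<dots> < \<infinity>" using V by (simp add: L2_complex_iff L2_sqdist_zero_right)
  finally show ?thesis
    by (simp add: L2_real_iff_L2_complex L2_complex_iff L2_sqdist_zero_right)
qed

lemma fourier_trunc_eq_truncated_fourier:
  "fourier_trunc f R = truncated_fourier R (\<lambda>x. complex_of_real (f x))"
  unfolding fourier_trunc_def truncated_fourier_def fourier_integral_def set_lebesgue_integral_def
  by (intro ext arg_cong[where f = "\<lambda>z. _ * z"] Bochner_Integration.integral_cong)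
     (auto simp: fourier_kernel_def indicator_def)

lemma has_L2_fourier_iff_complex:
  "has_L2_fourier f F \<longleftrightarrow> has_L2_fourier_complex (\<lambda>x. complex_of_real (f x)) F"
  unfolding has_L2_fourier_def has_L2_fourier_complex_def L2_sqdist_def fourier_trunc_eq_truncated_fourier ..

lemma truncated_fourier_of_real_minus:
  "truncated_fourier R (\<lambda>x. complex_of_real (f x)) (- p) = cnj (truncated_fourier R (\<lambda>x. complex_of_real (f x)) p)"
proof -
  have cnj_indicator: "cnj (indicator A x :: complex) = indicator A x" for A x
    by (cases "x \<in> A") simp_all
  show ?thesis
    unfolding truncated_fourier_def fourier_integral_def
    by (simp add: Bochner_Integration.integral_cnj[symmetric] cnj_fourier_kernel cnj_indicator)
qed

lemma has_L2_fourier_hermitian: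
  assumes F: "has_L2_fourier f F" and f: "L2_real f"
  shows "AE p in lborel. F (- p) = cnj (F p)"
proof -
  define fc where "fc x = complex_of_real (f x)" for x
  have F': "has_L2_fourier_complex fc F" using F unfolding has_L2_fourier_iff_complex fc_def .
  have [measurable]: "fc \<in> borel_measurable borel" "F \<in> borel_measurable borel"
    using f F' by (simp_all add: L2_real_iff_L2_complex fc_def[abs_def] has_L2_fourier_complex_def L2_complex_measurable)
  have "L2_sqdist (\<lambda>p. cnj (F (- p))) (truncated_fourier R fc) = L2_sqdist F (truncated_fourier R fc)" for R
  proof -
    have "L2_sqdist (\<lambda>p. cnj (F (- p))) (truncated_fourier R fc)
        = (\<integral>\<^sup>+p. ennreal ((cmod (F (- p) - truncated_fourier R fc (- p)))\<^sup>2) \<partial>lborel)"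
      unfolding L2_sqdist_def fc_def
      by (intro nn_integral_cong) (metis truncated_fourier_of_real_minus complex_cnj_cnj complex_cnj_diff complex_mod_cnj)
    also have "\<dots> = L2_sqdist F (truncated_fourier R fc)"
      unfolding L2_sqdist_def
      using nn_integral_lborel_translate(2)[of "\<lambda>p. ennreal ((cmod (F p - truncated_fourier R fc p))\<^sup>2)" 0]
      by simp
    finally show ?thesis .
  qed
  then have "AE p in lborel. cnj (F (- p)) = F p"
    using F' unfolding has_L2_fourier_complex_def
    by (intro L2_sqdist_limit_unique[where F = at_top and T = "\<lambda>R. truncated_fourier R fc"]) simp_all
  then show ?thesis by eventually_elim (metis complex_cnj_cnj)
qed

lemma integral_hermitian_real:
  fixes h :: "real \<Rightarrow> complex"
  assumes [measurable]: "h \<in> borel_measurable borel" and herm: "AE p in lborel. h (- p) = cnj (h p)"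
  shows "complex_of_real (Re (CLINT p|lborel. h p)) = (CLINT p|lborel. h p)"
proof -
  have "cnj (CLINT p|lborel. h p) = (CLINT p|lborel. h (- p))"
    unfolding Bochner_Integration.integral_cnj[symmetric] using herm by (intro integral_cong_AE) auto
  also have "\<dots> = (CLINT p|lborel. h p)"
    using lborel_integral_real_affine[of "- 1" h 0] by simp
  finally show ?thesis by (simp add: complex_eq_iff)
qed

lemma integral_Re_fourier_cnj_gauss:
  assumes U: "L2_complex U" and herm: "AE p in lborel. U (- p) = cnj (U p)"
    and V: "has_L2_fourier_complex (\<lambda>p. cnj (U p)) V"
  shows "(CLINT x|lborel. complex_of_real (Re (V x) * gauss (x + t)))
       = (CLINT p|lborel. U p * (complex_of_real (gauss p) * fourier_kernel t p))"
proof -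
  have [measurable]: "U \<in> borel_measurable borel" using U by (rule L2_complex_measurable)
  have U': "L2_complex (\<lambda>p. cnj (U p))"
    using U by (rule L2_complex_cnj)
  define z where "z = (CLINT p|lborel. U p * (complex_of_real (gauss p) * fourier_kernel t p))"
  have "(CLINT x|lborel. complex_of_real (Re (V x) * gauss (x + t)))
      = complex_of_real (Re (CLINT x|lborel. V x * complex_of_real (gauss (x + t))))"
    unfolding integral_complex_of_real
    using integrable_mult_L2[OF _ gauss_shifted_L2(1)] V
    by (simp add: has_L2_fourier_complex_def integral_Re[symmetric])
  also have "(CLINT x|lborel. V x * complex_of_real (gauss (x + t))) = cnj z"
    using has_L2_fourier_complex_gauss_duality(2)[OF V U', of t]
    by (simp add: z_def cnj_fourier_kernel flip: Bochner_Integration.integral_cnj)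
  also have "complex_of_real (Re z) = z"
    unfolding z_def
  proof (rule integral_hermitian_real)
    show "AE p in lborel. U (- p) * (complex_of_real (gauss (- p)) * fourier_kernel t (- p))
        = cnj (U p * (complex_of_real (gauss p) * fourier_kernel t p))"
      using herm by eventually_elim (simp add: gauss_minus cnj_fourier_kernel fourier_kernel_def exp_cnj)
  qed simp
  then have "complex_of_real (Re (cnj z)) = z" by simp
  finally show ?thesis unfolding z_def .
qed

lemma has_L2_fourier_of_hermitian:
  assumes U: "L2_complex U" and herm: "AE p in lborel. U (- p) = cnj (U p)"
  shows "\<exists>u. L2_real u \<and> has_L2_fourier u U"
proof -
  obtain V where V: "has_L2_fourier_complex (\<lambda>p. cnj (U p)) V"
    using has_L2_fourier_complex_exists[OF L2_complex_cnj[OF U]] by blast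
  define u where "u x = Re (V x)" for x
  have u: "L2_real u"
    unfolding u_def using V by (intro L2_real_Re) (simp add: has_L2_fourier_complex_def)
  then have uc: "L2_complex (\<lambda>x. complex_of_real (u x))" by (simp add: L2_real_iff_L2_complex)
  obtain W where W: "has_L2_fourier_complex (\<lambda>x. complex_of_real (u x)) W"
    using has_L2_fourier_complex_exists[OF uc] by blast
  have [measurable]: "W \<in> borel_measurable borel" "U \<in> borel_measurable borel"
    using W U by (simp_all add: has_L2_fourier_complex_def L2_complex_measurable)
  have "(CLINT p|lborel. W p * (complex_of_real (gauss p) * fourier_kernel t p))
      = (CLINT p|lborel. U p * (complex_of_real (gauss p) * fourier_kernel t p))" for t
    using has_L2_fourier_complex_gauss_duality(1)[OF W uc] integral_Re_fourier_cnj_gauss[OF U herm V]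
    by (simp add: u_def)
  then have "AE p in lborel. W p - U p = 0"
    using integrable_mult_L2[OF _ gauss_modulated_L2(1)] W U
    by (intro AE_zero_if_orthogonal_gauss_modulated)
       (simp_all add: L2_complex_diff has_L2_fourier_complex_def left_diff_distrib)
  then have "L2_sqdist U (truncated_fourier R (\<lambda>x. complex_of_real (u x)))
      = L2_sqdist W (truncated_fourier R (\<lambda>x. complex_of_real (u x)))" for R
    unfolding L2_sqdist_def by (intro nn_integral_cong_AE) auto
  then have "has_L2_fourier u U"
    using W U by (simp add: has_L2_fourier_iff_complex has_L2_fourier_complex_def)
  with u show ?thesis by blast
qed

section \<open>The equation\<close>

lemma symb_measurable [measurable]: "symb a b \<in> borel_measurable borel"
  unfolding symb_def[abs_def] by measurable

lemma symb_minus: "symb a b (- p) = cnj (symb a b p)"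
  unfolding symb_def by (simp add: complex_eq_iff)

lemma norm_symb_lower_bound:
  assumes "b \<noteq> 0" "p \<noteq> 0"
  shows "min 1 (\<bar>b\<bar> * exp (a - 1)) \<le> cmod (symb a b p)"
proof (cases "1 \<le> \<bar>ln (\<bar>p\<bar> / exp a)\<bar>")
  case True
  then show ?thesis
    using abs_Re_le_cmod[of "symb a b p"] by (simp add: symb_def)
next
  case False
  then have "exp (- 1) < exp (ln (\<bar>p\<bar> / exp a))" by simp
  then have "exp a * exp (- 1) < \<bar>p\<bar>"
    using assms(2) by (simp add: field_simps)
  then have "exp (a - 1) < \<bar>p\<bar>"
    by (simp add: exp_add[symmetric])
  then have "\<bar>b\<bar> * exp (a - 1) \<le> \<bar>b\<bar> * \<bar>p\<bar>" by (simp add: mult_left_mono)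
  also have "\<dots> \<le> cmod (symb a b p)"
    using abs_Im_le_cmod[of "symb a b p"] by (simp add: symb_def abs_mult)
  finally show ?thesis by simp
qed

lemma L2_complex_divide_bounded_below:
  assumes F: "L2_complex F" and [measurable]: "s \<in> borel_measurable borel"
    and \<delta>: "\<delta> > 0" and s: "AE p in lborel. \<delta> \<le> cmod (s p)"
  shows "L2_complex (\<lambda>p. F p / s p)"
proof -
  have [measurable]: "F \<in> borel_measurable borel" using F by (rule L2_complex_measurable)
  have "(\<integral>\<^sup>+p. ennreal ((cmod (F p / s p))\<^sup>2) \<partial>lborel) \<le> (\<integral>\<^sup>+p. ennreal (1 / \<delta>\<^sup>2) * ennreal ((cmod (F p))\<^sup>2) \<partial>lborel)"
    using s
  proof (intro nn_integral_mono_AE, eventually_elim)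
    case (elim p)
    have "0 < cmod (s p) * \<delta>" using elim \<delta> by (intro mult_pos_pos) linarith+
    then have "cmod (F p / s p) \<le> cmod (F p) / \<delta>"
      unfolding norm_divide by (rule divide_left_mono[OF elim(2) norm_ge_zero])
    then have "(cmod (F p / s p))\<^sup>2 \<le> (cmod (F p) / \<delta>)\<^sup>2"
      by (rule power_mono) simp
    then have "(cmod (F p / s p))\<^sup>2 \<le> 1 / \<delta>\<^sup>2 * (cmod (F p))\<^sup>2"
      by (simp add: power_divide)
    then show ?case by (simp add: ennreal_mult[symmetric])
  qed
  also have "\<dots> < \<infinity>"
    using F by (simp add: nn_integral_cmult L2_complex_iff L2_sqdist_zero_right ennreal_mult_less_top)
  finally show ?thesis by (simp add: L2_complex_iff L2_sqdist_zero_right)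
qed

lemma solves_eq_unique_existence:
  assumes b: "b \<noteq> 0" and f: "L2_real f"
  shows "\<exists>u. solves_eq a b f u \<and> (\<forall>v. solves_eq a b f v \<longrightarrow> (AE x in lborel. v x = u x))"
proof -
  have fc: "L2_complex (\<lambda>x. complex_of_real (f x))" using f by (simp add: L2_real_iff_L2_complex)
  obtain F where F: "has_L2_fourier f F"
    using has_L2_fourier_complex_exists[OF fc] by (auto simp: has_L2_fourier_iff_complex)
  have F_L2: "L2_complex F" using F by (simp add: has_L2_fourier_iff_complex has_L2_fourier_complex_def)
  define \<delta> where "\<delta> = min 1 (\<bar>b\<bar> * exp (a - 1))"
  have \<delta>: "\<delta> > 0" using b by (simp add: \<delta>_def)
  have symb_ge: "AE p in lborel. \<delta> \<le> cmod (symb a b p)"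
    using AE_lborel_singleton[of 0] by eventually_elim (simp add: \<delta>_def norm_symb_lower_bound[OF b])
  then have symb_ne: "AE p in lborel. symb a b p \<noteq> 0"
    by eventually_elim (use \<delta> in auto)
  \<comment> \<open>\<open>symb a b 0 = 0\<close>, so \<open>U 0 = 0\<close>; harmless, as \<open>{0}\<close> is a null set\<close>
  define U where "U p = F p / symb a b p" for p
  have "L2_complex U"
    unfolding U_def by (rule L2_complex_divide_bounded_below[OF F_L2 symb_measurable \<delta> symb_ge])
  moreover have "AE p in lborel. U (- p) = cnj (U p)"
    using has_L2_fourier_hermitian[OF F f] by eventually_elim (simp add: U_def symb_minus)
  ultimately obtain u where u: "L2_real u" "has_L2_fourier u U"
    using has_L2_fourier_of_hermitian by blast
  have U_symb: "AE p in lborel. symb a b p * U p = F p"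
    using symb_ne by eventually_elim (simp add: U_def)
  have "AE x in lborel. v x = u x" if v: "solves_eq a b f v" for v
  proof -
    obtain V F' where V: "has_L2_fourier v V" and F': "has_L2_fourier f F'"
      and V_symb: "AE p in lborel. symb a b p * V p = F' p"
      using v unfolding solves_eq_def by blast
    have "AE p in lborel. F' p = F p"
      using F F' L2_complex_measurable[OF fc]
      by (intro has_L2_fourier_complex_unique) (simp_all add: has_L2_fourier_iff_complex)
    then have "AE p in lborel. V p = U p"
      using V_symb U_symb symb_ne by eventually_elim (metis mult_left_cancel)
    moreover have "L2_complex (\<lambda>x. complex_of_real (v x))"
      using v by (simp add: solves_eq_def L2_real_iff_L2_complex)
    ultimately have "AE x in lborel. complex_of_real (v x) = complex_of_real (u x)"
      using has_L2_fourier_complex_injective[of "\<lambda>x. complex_of_real (v x)" V "\<lambda>x. complex_of_real (u x)" U]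
        V u by (simp add: has_L2_fourier_iff_complex L2_real_iff_L2_complex)
    then show ?thesis by simp
  qed
  moreover have "solves_eq a b f u"
    unfolding solves_eq_def using u F U_symb by blast
  ultimately show ?thesis by blast
qed

theorem lemma5:
  fixes N :: nat and a b :: "nat \<Rightarrow> real" and f :: "nat \<Rightarrow> real \<Rightarrow> real"
  assumes "N \<ge> 1"
    and "\<forall>m\<in>{1..N}. b m \<noteq> 0"
    and "\<forall>m\<in>{1..N}. L2_real (f m)"
    and "\<exists>m\<in>{1..N}. \<exists>x. f m x \<noteq> 0"
  shows "\<exists>u :: nat \<Rightarrow> real \<Rightarrow> real.
           (\<forall>m\<in>{1..N}. solves_eq (a m) (b m) (f m) (u m)) \<and>
           (\<forall>v :: nat \<Rightarrow> real \<Rightarrow> real.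
              (\<forall>m\<in>{1..N}. solves_eq (a m) (b m) (f m) (v m)) \<longrightarrow>
              (\<forall>m\<in>{1..N}. AE x in lborel. v m x = u m x))"
proof -
  \<comment> \<open>the equations decouple\<close>
  have "\<forall>m\<in>{1..N}. \<exists>w. solves_eq (a m) (b m) (f m) w \<and>
          (\<forall>v. solves_eq (a m) (b m) (f m) v \<longrightarrow> (AE x in lborel. v x = w x))"
    using assms(2,3) solves_eq_unique_existence by blast
  then obtain u where "\<forall>m\<in>{1..N}. solves_eq (a m) (b m) (f m) (u m) \<and>
          (\<forall>v. solves_eq (a m) (b m) (f m) v \<longrightarrow> (AE x in lborel. v x = u m x))"
    by (rule bchoice[elim_format]) blast
  then show ?thesis by blast
qed

end
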